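(* Assume the standing setup, let $(\hat\sigma,\varphi)$ be fine and let $\nu,\lambda$ be the fixed conformal measure. Then there exists a constant $\hat M<\infty$ such that $$\|\hat{\mathcal L}_x^n\|_\infty=\|\hat{\mathcal L}_x^n1\|_\infty\le\hat M\quad\text{for every }n\ge0\text{ and }m\text{-a.e. }x\in X,$$ where $\|\hat{\mathcal L}_x^n\|_\infty$ is the operator norm on bounded continuous functions with the supremum norm.
   Context: Standing setup. $(X,\mathcal F,m)$ is a complete probability space and $\theta:X\to X$ an invertible measurable $m$-preserving map. $E=\mathbb N$, and $x\mapsto A(x)=(A_{ij}(x))_{i,j\in E}$ is a measurable map into $\{0,1\}$-matrices. $E_x^\infty$ is the set of $\omega\in E^{\mathbb N}$ with $A_{\omega_i\omega_{i+1}}(\theta^i(x))=1$ for all $i\ge0$; $[F]_x=\{\tau\in E_x^\infty:\tau_0\in F\}$, $[e]_x=[\{e\}]_x$, $[0,\dots,l]_x=[\{0,\dots,l\}]_x$; complements in $E_x^\infty$. Metric $d(\omega,\tau)=e^{-\min\{n:\omega_n\ne\tau_n\}}$. $\sigma_x:E_x^\infty\to E_{\theta(x)}^\infty$ the shift, $\Omega=\bigcup_x\{x\}\times E_x^\infty$, $\hat\sigma(x,\omega)=(\theta(x),\sigma_x\omega)$, $\varphi_x=\varphi(x,\cdot)$. $\hat\sigma$ is topologically mixing: for all $a,b\in E$ there is $N$ such that for all $n\ge N$ and all $x$ there is a word $\omega$ of length $n+1$ with $a\omega b$ admissible at $x$. Fix $\alpha>0$; $v_\alpha(g)=\sup\{|g(\tau)-g(\omega)|/d(\tau,\omega)^\alpha:\tau\ne\omega,\tau_0=\omega_0\}$.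 Summable potential: measurable $\varphi:\Omega\to\mathbb R$, $\varphi_x$ continuous, $\operatorname{ess\,sup}_xv_\alpha(\varphi_x)<\infty$, for each $e$ constants $0<c_e<C_e$ with $c_e\le e^{\varphi_x}\le C_e$ on $[e]_x$ a.e., and $\lim_{l\to\infty}\operatorname{ess\,sup}_x\sup\mathcal L_x(1_{[0,\dots,l]_x^c})=0$, where $\mathcal L_xg(\omega)=\sum_{e:\,A_{e\omega_0}(x)=1}g(e\omega)e^{\varphi_x(e\omega)}$, $\omega\in E_{\theta(x)}^\infty$. (A): for each $e$ some $M_e>0$ with $M_e^{-1}\le\mathcal L_x1$ on $[e]_{\theta(x)}$ a.e.; (B): $\lim_{e\to\infty}\operatorname{ess\,sup}_x\sup_{[e]_{\theta(x)}}\mathcal L_x1=0$; (C): there are $0<\kappa<1/4$ and finite $F\subset E$ with $\sup\mathcal L_x(1_{E_x^\infty\setminus[F]_x})\le\kappa\inf_{[F]_{\theta(x)}}\mathcal L_x1$ a.e. Fine: $\varphi$ summable and (A),(B),(C). Random measures: probability measures on $\Omega$ with marginal $m$ and disintegrations $\nu_x$. Fixed conformal measure: a random measure $\nu$ with a measurable $\lambda:X\to(0,\infty)$ such that $\int\mathcal L_xg\,d\nu_{\theta(x)}=\lambda_x\int g\,d\nu_x$ for all bounded continuous $g$ and a.e. $x$, with $\operatorname{ess\,sup}|\log\lambda|<\infty$ and $\nu_x([F]_x)\ge1/2$ a.e. ($F$ from (C)). $\hat{\mathcal L}_x=\lambda_x^{-1}\mathcal L_x$, $\hat{\mathcal L}_x^n=\hat{\mathcal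 L}_{\theta^{n-1}(x)}\circ\cdots\circ\hat{\mathcal L}_x$ (and $\hat{\mathcal L}^0_x$ the identity). *)

theory Defs
  imports "HOL-Analysis.Analysis" "HOL-Probability.Probability"
begin

text \<open>Random countable Markov shift.  The alphabet is E = nat, the base space is a measure
  space M with an invertible map theta, and A x i j (a boolean) encodes A_ij(x) = 1.\<close>

definition Efib :: "('a \<Rightarrow> nat \<Rightarrow> nat \<Rightarrow> bool) \<Rightarrow> ('a \<Rightarrow> 'a) \<Rightarrow> 'a \<Rightarrow> (nat \<Rightarrow> nat) set" where
  "Efib A \<theta> x = {w. \<forall>i. A ((\<theta> ^^ i) x) (w i) (w (Suc i))}"

definition cyl :: "('a \<Rightarrow> nat \<Rightarrow> nat \<Rightarrow> bool) \<Rightarrow> ('a \<Rightarrow> 'a) \<Rightarrow> 'a \<Rightarrow> nat set \<Rightarrow> (nat \<Rightarrow> nat) set" where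
  "cyl A \<theta> x F = {t \<in> Efib A \<theta> x. t 0 \<in> F}"

definition Omega :: "'a measure \<Rightarrow> ('a \<Rightarrow> nat \<Rightarrow> nat \<Rightarrow> bool) \<Rightarrow> ('a \<Rightarrow> 'a) \<Rightarrow> ('a \<times> (nat \<Rightarrow> nat)) set" where
  "Omega M A \<theta> = (SIGMA x:space M. Efib A \<theta> x)"

text \<open>Sigma algebra on E^N: product of discrete sigma algebras (= Borel sets of the metric d).\<close>
definition seqM :: "(nat \<Rightarrow> nat) measure" where
  "seqM = (\<Pi>\<^sub>M i\<in>UNIV. count_space UNIV)"

definition OmegaM :: "'a measure \<Rightarrow> ('a \<Rightarrow> nat \<Rightarrow> nat \<Rightarrow> bool) \<Rightarrow> ('a \<Rightarrow> 'a) \<Rightarrow> ('a \<times> (nat \<Rightarrow> nat)) measure" where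
  "OmegaM M A \<theta> = restrict_space (M \<Otimes>\<^sub>M seqM) (Omega M A \<theta>)"

definition dseq :: "(nat \<Rightarrow> nat) \<Rightarrow> (nat \<Rightarrow> nat) \<Rightarrow> real" where
  "dseq w t = (if w = t then 0 else exp (- real (LEAST n. w n \<noteq> t n)))"

definition dcont_on :: "(nat \<Rightarrow> nat) set \<Rightarrow> ((nat \<Rightarrow> nat) \<Rightarrow> real) \<Rightarrow> bool" where
  "dcont_on S g \<longleftrightarrow> (\<forall>w\<in>S. \<forall>\<epsilon>>0. \<exists>\<delta>>0. \<forall>t\<in>S. dseq t w < \<delta> \<longrightarrow> \<bar>g t - g w\<bar> < \<epsilon>)"

definition Cb :: "(nat \<Rightarrow> nat) set \<Rightarrow> ((nat \<Rightarrow> nat) \<Rightarrow> real) set" where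
  "Cb S = {g. dcont_on S g \<and> (\<exists>B. \<forall>w\<in>S. \<bar>g w\<bar> \<le> B)}"

definition v_alpha :: "real \<Rightarrow> (nat \<Rightarrow> nat) set \<Rightarrow> ((nat \<Rightarrow> nat) \<Rightarrow> real) \<Rightarrow> ereal" where
  "v_alpha \<alpha> S g = (SUP (t, w) \<in> {(t, w). t \<in> S \<and> w \<in> S \<and> t \<noteq> w \<and> t 0 = w 0}.
       ereal (\<bar>g t - g w\<bar> / dseq t w powr \<alpha>))"

definition Lop :: "('a \<Rightarrow> nat \<Rightarrow> nat \<Rightarrow> bool) \<Rightarrow> ('a \<Rightarrow> (nat \<Rightarrow> nat) \<Rightarrow> real) \<Rightarrow> 'a
      \<Rightarrow> ((nat \<Rightarrow> nat) \<Rightarrow> real) \<Rightarrow> (nat \<Rightarrow> nat) \<Rightarrow> real" where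
  "Lop A \<phi> x g w = (\<Sum>\<^sub>\<infinity>e\<in>{e. A x e (w 0)}. g (case_nat e w) * exp (\<phi> x (case_nat e w)))"

definition Lhat :: "('a \<Rightarrow> nat \<Rightarrow> nat \<Rightarrow> bool) \<Rightarrow> ('a \<Rightarrow> (nat \<Rightarrow> nat) \<Rightarrow> real) \<Rightarrow> ('a \<Rightarrow> real) \<Rightarrow> 'a
      \<Rightarrow> ((nat \<Rightarrow> nat) \<Rightarrow> real) \<Rightarrow> (nat \<Rightarrow> nat) \<Rightarrow> real" where
  "Lhat A \<phi> lam x g w = Lop A \<phi> x g w / lam x"

fun Lhat_pow :: "('a \<Rightarrow> nat \<Rightarrow> nat \<Rightarrow> bool) \<Rightarrow> ('a \<Rightarrow> 'a) \<Rightarrow> ('a \<Rightarrow> (nat \<Rightarrow> nat) \<Rightarrow> real) \<Rightarrow> ('a \<Rightarrow> real)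
      \<Rightarrow> nat \<Rightarrow> 'a \<Rightarrow> ((nat \<Rightarrow> nat) \<Rightarrow> real) \<Rightarrow> (nat \<Rightarrow> nat) \<Rightarrow> real" where
  "Lhat_pow A \<theta> \<phi> lam 0 x g = g"
| "Lhat_pow A \<theta> \<phi> lam (Suc n) x g = Lhat A \<phi> lam ((\<theta> ^^ n) x) (Lhat_pow A \<theta> \<phi> lam n x g)"

text \<open>Supremum norm on S (sup of the empty set is 0).\<close>
definition supnorm :: "(nat \<Rightarrow> nat) set \<Rightarrow> ((nat \<Rightarrow> nat) \<Rightarrow> real) \<Rightarrow> ennreal" where
  "supnorm S f = (SUP w\<in>S. ennreal \<bar>f w\<bar>)"

definition opnorm :: "(nat \<Rightarrow> nat) set \<Rightarrow> (nat \<Rightarrow> nat) set \<Rightarrow> (((nat \<Rightarrow> nat) \<Rightarrow> real) \<Rightarrow> (nat \<Rightarrow> nat) \<Rightarrow> real) \<Rightarrow> ennreal" where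
  "opnorm S S' T = (SUP g\<in>{g \<in> Cb S. supnorm S g \<le> 1}. supnorm S' (T g))"

definition standing_setup :: "'a measure \<Rightarrow> ('a \<Rightarrow> 'a) \<Rightarrow> ('a \<Rightarrow> nat \<Rightarrow> nat \<Rightarrow> bool) \<Rightarrow> bool" where
  "standing_setup M \<theta> A \<longleftrightarrow>
     prob_space M \<and> complete_measure M \<and>
     \<theta> \<in> M \<rightarrow>\<^sub>M M \<and> bij_betw \<theta> (space M) (space M) \<and> inv_into (space M) \<theta> \<in> M \<rightarrow>\<^sub>M M \<and>
     distr M M \<theta> = M \<and>
     (\<forall>i j. {x \<in> space M. A x i j} \<in> sets M) \<and>
     \<comment> \<open>topological mixing\<close>
     (\<forall>a b. \<exists>N. \<forall>n\<ge>N. \<forall>x\<in>space M. \<exists>w :: nat \<Rightarrow> nat.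
         w 0 = a \<and> w (n + 2) = b \<and> (\<forall>i<n + 2. A ((\<theta> ^^ i) x) (w i) (w (Suc i))))"

definition summable_potential :: "'a measure \<Rightarrow> ('a \<Rightarrow> 'a) \<Rightarrow> ('a \<Rightarrow> nat \<Rightarrow> nat \<Rightarrow> bool) \<Rightarrow> real
      \<Rightarrow> ('a \<Rightarrow> (nat \<Rightarrow> nat) \<Rightarrow> real) \<Rightarrow> bool" where
  "summable_potential M \<theta> A \<alpha> \<phi> \<longleftrightarrow>
     (\<lambda>(x, w). \<phi> x w) \<in> borel_measurable (OmegaM M A \<theta>) \<and>
     (\<forall>x\<in>space M. dcont_on (Efib A \<theta> x) (\<phi> x)) \<and>
     (\<exists>K::real. AE x in M. v_alpha \<alpha> (Efib A \<theta> x) (\<phi> x) \<le> ereal K) \<and>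
     (\<forall>e. \<exists>c C. 0 < c \<and> c < C \<and>
         (AE x in M. \<forall>w\<in>cyl A \<theta> x {e}. c \<le> exp (\<phi> x w) \<and> exp (\<phi> x w) \<le> C)) \<and>
     \<comment> \<open>lim_l esssup_x sup L_x(1_{[0..l]_x^c}) = 0\<close>
     (\<forall>\<epsilon>>0. \<exists>l0. \<forall>l\<ge>l0. AE x in M. \<forall>w\<in>Efib A \<theta> (\<theta> x).
         Lop A \<phi> x (indicator (Efib A \<theta> x - cyl A \<theta> x {0..l})) w \<le> \<epsilon>)"

definition condA :: "'a measure \<Rightarrow> ('a \<Rightarrow> 'a) \<Rightarrow> ('a \<Rightarrow> nat \<Rightarrow> nat \<Rightarrow> bool) \<Rightarrow> ('a \<Rightarrow> (nat \<Rightarrow> nat) \<Rightarrow> real) \<Rightarrow> bool" where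
  "condA M \<theta> A \<phi> \<longleftrightarrow> (\<forall>e. \<exists>Me>0. AE x in M. \<forall>w\<in>cyl A \<theta> (\<theta> x) {e}. 1 / Me \<le> Lop A \<phi> x (\<lambda>_. 1) w)"

definition condB :: "'a measure \<Rightarrow> ('a \<Rightarrow> 'a) \<Rightarrow> ('a \<Rightarrow> nat \<Rightarrow> nat \<Rightarrow> bool) \<Rightarrow> ('a \<Rightarrow> (nat \<Rightarrow> nat) \<Rightarrow> real) \<Rightarrow> bool" where
  "condB M \<theta> A \<phi> \<longleftrightarrow> (\<forall>\<epsilon>>0. \<exists>e0. \<forall>e\<ge>e0. AE x in M. \<forall>w\<in>cyl A \<theta> (\<theta> x) {e}. Lop A \<phi> x (\<lambda>_. 1) w \<le> \<epsilon>)"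

definition condC_with :: "'a measure \<Rightarrow> ('a \<Rightarrow> 'a) \<Rightarrow> ('a \<Rightarrow> nat \<Rightarrow> nat \<Rightarrow> bool) \<Rightarrow> ('a \<Rightarrow> (nat \<Rightarrow> nat) \<Rightarrow> real)
      \<Rightarrow> real \<Rightarrow> nat set \<Rightarrow> bool" where
  "condC_with M \<theta> A \<phi> \<kappa> F \<longleftrightarrow> 0 < \<kappa> \<and> \<kappa> < 1/4 \<and> finite F \<and>
     (AE x in M. \<forall>w\<in>Efib A \<theta> (\<theta> x). \<forall>w'\<in>cyl A \<theta> (\<theta> x) F.
        Lop A \<phi> x (indicator (Efib A \<theta> x - cyl A \<theta> x F)) w \<le> \<kappa> * Lop A \<phi> x (\<lambda>_. 1) w')"

definition fine_potential :: "'a measure \<Rightarrow> ('a \<Rightarrow> 'a) \<Rightarrow> ('a \<Rightarrow> nat \<Rightarrow> nat \<Rightarrow> bool) \<Rightarrow> real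
      \<Rightarrow> ('a \<Rightarrow> (nat \<Rightarrow> nat) \<Rightarrow> real) \<Rightarrow> nat set \<Rightarrow> bool" where
  "fine_potential M \<theta> A \<alpha> \<phi> F \<longleftrightarrow> summable_potential M \<theta> A \<alpha> \<phi> \<and> condA M \<theta> A \<phi> \<and> condB M \<theta> A \<phi> \<and>
     (\<exists>\<kappa>. condC_with M \<theta> A \<phi> \<kappa> F)"

definition random_measure :: "'a measure \<Rightarrow> ('a \<Rightarrow> 'a) \<Rightarrow> ('a \<Rightarrow> nat \<Rightarrow> nat \<Rightarrow> bool) \<Rightarrow> ('a \<Rightarrow> (nat \<Rightarrow> nat) measure) \<Rightarrow> bool" where
  "random_measure M \<theta> A \<nu> \<longleftrightarrow>
     (\<forall>x\<in>space M. prob_space (\<nu> x) \<and> sets (\<nu> x) = sets (restrict_space seqM (Efib A \<theta> x))) \<and>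
     (\<forall>B\<in>sets (OmegaM M A \<theta>). (\<lambda>x. measure (\<nu> x) {w. (x, w) \<in> B}) \<in> borel_measurable M)"

definition fixed_conformal :: "'a measure \<Rightarrow> ('a \<Rightarrow> 'a) \<Rightarrow> ('a \<Rightarrow> nat \<Rightarrow> nat \<Rightarrow> bool) \<Rightarrow> ('a \<Rightarrow> (nat \<Rightarrow> nat) \<Rightarrow> real)
      \<Rightarrow> nat set \<Rightarrow> ('a \<Rightarrow> (nat \<Rightarrow> nat) measure) \<Rightarrow> ('a \<Rightarrow> real) \<Rightarrow> bool" where
  "fixed_conformal M \<theta> A \<phi> F \<nu> lam \<longleftrightarrow>
     random_measure M \<theta> A \<nu> \<and>
     lam \<in> borel_measurable M \<and> (\<forall>x\<in>space M. 0 < lam x) \<and>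
     (AE x in M. \<forall>g\<in>Cb (Efib A \<theta> x).
        (\<integral>w. Lop A \<phi> x g w \<partial>\<nu> (\<theta> x)) = lam x * (\<integral>w. g w \<partial>\<nu> x)) \<and>
     (\<exists>K::real. AE x in M. \<bar>ln (lam x)\<bar> \<le> K) \<and>
     (AE x in M. measure (\<nu> x) (cyl A \<theta> x F) \<ge> 1/2)"

end

theory Submission
  imports Defs
begin

text \<open>Write h_n for the normalised iterate of 1 along the orbit of x. It is nonnegative, has
  integral 1 against the conformal measure, and varies by at most a fixed factor on each cylinder
  of length one (Hoelder continuity of the potential). Since \<nu>([F]) \<ge> 1/2, some cylinder [b],
  b \<in> F, has measure at least 1/(2|F|), so by Markov's inequality it contains a point where
  h_n \<le> 4|F|. Topological
  mixing joins each letter of F to b by a path of bounded length, and (B) bounds the letters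
  along it, so reading the recursion for h_n backwards along the path bounds h_n on [F] by a
  constant Q. Splitting the transfer operator into the contributions of [F] and its complement,
  condition (C) yields h_{n+1} \<le> e^K Q BL + 3\<kappa> sup h_n with 3\<kappa> < 3/4, which closes an induction.
  Finally, positivity of the operators makes the operator norm equal to sup h_n.\<close>

section \<open>Admissible sequences and the metric\<close>

lemma Efib_cons_iff:
  "case_nat e w \<in> Efib A \<theta> y \<longleftrightarrow> A y e (w 0) \<and> w \<in> Efib A \<theta> (\<theta> y)"
proof -
  have "(\<forall>i. A ((\<theta> ^^ i) y) (case_nat e w i) (case_nat e w (Suc i))) \<longleftrightarrow>
        A y e (w 0) \<and> (\<forall>i. A ((\<theta> ^^ i) (\<theta> y)) (w i) (w (Suc i)))"
  proof
    assume H: "\<forall>i. A ((\<theta> ^^ i) y) (case_nat e w i) (case_nat e w (Suc i))"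
    show "A y e (w 0) \<and> (\<forall>i. A ((\<theta> ^^ i) (\<theta> y)) (w i) (w (Suc i)))"
      using H[rule_format, of 0] H[rule_format, of "Suc _"]
      by (simp add: funpow_Suc_right del: funpow.simps)
  next
    assume H: "A y e (w 0) \<and> (\<forall>i. A ((\<theta> ^^ i) (\<theta> y)) (w i) (w (Suc i)))"
    show "\<forall>i. A ((\<theta> ^^ i) y) (case_nat e w i) (case_nat e w (Suc i))"
      using H by (auto simp: funpow_Suc_right simp del: funpow.simps split: nat.split)
  qed
  then show ?thesis by (simp add: Efib_def)
qed

lemma Efib_funpow_iff:
  "w \<in> Efib A \<theta> ((\<theta> ^^ m) x) \<longleftrightarrow> (\<forall>i. A ((\<theta> ^^ (m + i)) x) (w i) (w (Suc i)))"
  by (simp add: Efib_def funpow_add add.commute)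

lemma Efib_shift:
  assumes "w \<in> Efib A \<theta> ((\<theta> ^^ n) x)"
  shows "(\<lambda>i. w (i + k)) \<in> Efib A \<theta> ((\<theta> ^^ (n + k)) x)"
proof -
  have "A ((\<theta> ^^ (n + (i + k))) x) (w (i + k)) (w (Suc (i + k)))" for i
    using assms unfolding Efib_funpow_iff by blast
  then show ?thesis unfolding Efib_funpow_iff by (simp add: algebra_simps)
qed

lemma Efib_splice:
  assumes u: "\<forall>j<L. A ((\<theta> ^^ (n + j)) x) (u j) (u (Suc j))"
    and uL: "u L = \<tau> 0" and \<tau>: "\<tau> \<in> Efib A \<theta> ((\<theta> ^^ (n + L)) x)"
  shows "(\<lambda>i. if i < L then u i else \<tau> (i - L)) \<in> Efib A \<theta> ((\<theta> ^^ n) x)"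
  unfolding Efib_funpow_iff
proof
  fix i
  consider "Suc i < L" | "Suc i = L" | "L \<le> i" by linarith
  then show "A ((\<theta> ^^ (n + i)) x) (if i < L then u i else \<tau> (i - L))
             (if Suc i < L then u (Suc i) else \<tau> (Suc i - L))"
  proof cases
    case 3
    then have "A ((\<theta> ^^ (n + L + (i - L))) x) (\<tau> (i - L)) (\<tau> (Suc (i - L)))"
      using \<tau> unfolding Efib_funpow_iff by blast
    with 3 show ?thesis by (simp add: Suc_diff_le)
  next
    case 2
    then show ?thesis using u[rule_format, of i] uL by auto
  qed (use u in simp)
qed

lemma dseq_nonneg: "0 \<le> dseq t w"
  by (simp add: dseq_def)

lemma dseq_le_1: "dseq t w \<le> 1"
  by (simp add: dseq_def)

lemma dseq_le_exp_if_agree: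
  assumes "\<forall>j\<le>k. t j = w j"
  shows "dseq t w \<le> exp (- real (Suc k))"
proof (cases "t = w")
  case False
  then obtain n where n: "t n \<noteq> w n" by auto
  have "Suc k \<le> (LEAST n. t n \<noteq> w n)"
  proof (rule ccontr)
    assume "\<not> ?thesis"
    then have "(LEAST n. t n \<noteq> w n) \<le> k" by simp
    with assms LeastI[of "\<lambda>n. t n \<noteq> w n", OF n] show False by blast
  qed
  then show ?thesis using False by (simp add: dseq_def)
qed (simp add: dseq_def)

lemma agree_if_dseq_less_exp:
  assumes "dseq t w < exp (- real k)"
  shows "\<forall>j\<le>k. t j = w j"
proof (cases "t = w")
  case False
  then have "k < (LEAST n. t n \<noteq> w n)" using assms by (simp add: dseq_def)
  show ?thesis
  proof (intro allI impI)
    fix j assume "j \<le> k"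
    with \<open>k < _\<close> have "j < (LEAST n. t n \<noteq> w n)" by linarith
    from not_less_Least[OF this] show "t j = w j" by simp
  qed
qed simp

lemma dseq_case_nat: "dseq (case_nat e t) (case_nat e t') = exp (-1) * dseq t t'"
proof (cases "t = t'")
  case False
  then obtain m where m: "t m \<noteq> t' m" by auto
  have ne: "case_nat e t \<noteq> case_nat e t'" using False by (metis nat.case(2) ext)
  have "(LEAST n. case_nat e t n \<noteq> case_nat e t' n) = Suc (LEAST m. t m \<noteq> t' m)"
    using Least_Suc[of "\<lambda>n. case_nat e t n \<noteq> case_nat e t' n" "Suc m"] m by simp
  then show ?thesis using False ne by (simp add: dseq_def mult_exp_exp)
qed (simp add: dseq_def)

lemma dseq_case_nat_powr:
  "dseq (case_nat e t) (case_nat e t') powr a = exp (- a) * dseq t t' powr a"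
  unfolding dseq_case_nat by (simp add: powr_mult dseq_nonneg powr_def[of "exp (-1)"])

definition cyl_nhds :: "(nat \<Rightarrow> nat) set \<Rightarrow> (nat \<Rightarrow> nat) \<Rightarrow> (nat \<Rightarrow> nat) filter" where
  "cyl_nhds S w = (INF k. principal {t\<in>S. \<forall>j\<le>k. t j = w j})"

lemma eventually_cyl_nhds:
  "eventually P (cyl_nhds S w) \<longleftrightarrow> (\<exists>k. \<forall>t\<in>S. (\<forall>j\<le>k. t j = w j) \<longrightarrow> P t)"
proof -
  have d: "\<exists>k. principal {t \<in> S. \<forall>j\<le>k. t j = w j}
          \<le> principal {t \<in> S. \<forall>j\<le>a. t j = w j} \<sqinter> principal {t \<in> S. \<forall>j\<le>b. t j = w j}" for a b
    by (rule exI[of _ "max a b"]) auto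
  show ?thesis
    unfolding cyl_nhds_def
    by (subst eventually_INF_base) (blast, use d in blast, auto simp: eventually_principal)
qed

lemma dcont_on_iff_tendsto: "dcont_on S g \<longleftrightarrow> (\<forall>w\<in>S. (g \<longlongrightarrow> g w) (cyl_nhds S w))"
proof
  assume H: "dcont_on S g"
  show "\<forall>w\<in>S. (g \<longlongrightarrow> g w) (cyl_nhds S w)"
  proof (intro ballI tendstoI)
    fix w e assume w: "w \<in> S" and e: "(0::real) < e"
    obtain \<delta> where \<delta>: "\<delta> > 0" "\<forall>t\<in>S. dseq t w < \<delta> \<longrightarrow> \<bar>g t - g w\<bar> < e"
      using H w e unfolding dcont_on_def by blast
    obtain k :: nat where "- ln \<delta> < real k" using reals_Archimedean2 by blast
    then have "exp (- real (Suc k)) < exp (ln \<delta>)" by simp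
    then have "exp (- real (Suc k)) < \<delta>" using \<delta>(1) by simp
    then show "eventually (\<lambda>t. dist (g t) (g w) < e) (cyl_nhds S w)"
      unfolding eventually_cyl_nhds dist_real_def
      using \<delta>(2) dseq_le_exp_if_agree by (meson le_less_trans)
  qed
next
  assume H: "\<forall>w\<in>S. (g \<longlongrightarrow> g w) (cyl_nhds S w)"
  show "dcont_on S g" unfolding dcont_on_def
  proof (intro ballI allI impI)
    fix w e assume w: "w \<in> S" and e: "(0::real) < e"
    obtain k where k: "\<forall>t\<in>S. (\<forall>j\<le>k. t j = w j) \<longrightarrow> dist (g t) (g w) < e"
      using tendstoD[OF H[rule_format, OF w] e] unfolding eventually_cyl_nhds by blast
    show "\<exists>\<delta>>0. \<forall>t\<in>S. dseq t w < \<delta> \<longrightarrow> \<bar>g t - g w\<bar> < e"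
      using k agree_if_dseq_less_exp[of _ w k]
      by (intro exI[of _ "exp (- real k)"]) (auto simp: dist_real_def)
  qed
qed

lemma filterlim_case_nat_cyl_nhds:
  assumes "\<And>t. t \<in> S' \<Longrightarrow> t 0 = w 0 \<Longrightarrow> case_nat e t \<in> S"
  shows "filterlim (case_nat e) (cyl_nhds S (case_nat e w)) (cyl_nhds S' w)"
  unfolding filterlim_iff eventually_cyl_nhds
proof (intro allI impI)
  fix P assume "\<exists>k. \<forall>t\<in>S. (\<forall>j\<le>k. t j = case_nat e w j) \<longrightarrow> P t"
  then obtain k where k: "\<forall>t\<in>S. (\<forall>j\<le>k. t j = case_nat e w j) \<longrightarrow> P t" by blast
  have "\<forall>t\<in>S'. (\<forall>j\<le>k. t j = w j) \<longrightarrow> P (case_nat e t)"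
    using k assms by (auto split: nat.split)
  then show "\<exists>k. \<forall>t\<in>S'. (\<forall>j\<le>k. t j = w j) \<longrightarrow> P (case_nat e t)" by blast
qed

lemma Cb_const: "(\<lambda>_. a) \<in> Cb S"
  unfolding Cb_def dcont_on_def by auto

lemma Cb_divide:
  assumes "g \<in> Cb S"
  shows "(\<lambda>w. g w / c) \<in> Cb S"
proof -
  obtain B where "\<forall>w\<in>S. \<bar>g w\<bar> \<le> B" using assms unfolding Cb_def by blast
  then have "\<forall>w\<in>S. \<bar>g w / c\<bar> \<le> B / \<bar>c\<bar>"
    by (auto simp: abs_divide divide_right_mono)
  moreover have "dcont_on S (\<lambda>w. g w / c)"
    using assms unfolding Cb_def dcont_on_iff_tendsto divide_inverse
    by (blast intro: tendsto_mult_right)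
  ultimately show ?thesis unfolding Cb_def by blast
qed

section \<open>The transfer operator on a single fibre\<close>

lemma summable_weights_if_Lop_one_nonzero:
  assumes "Lop A \<phi> y (\<lambda>_. 1) w \<noteq> 0"
  shows "(\<lambda>e. exp (\<phi> y (case_nat e w))) summable_on {e. A y e (w 0)}"
  using assms infsum_not_exists unfolding Lop_def by force

locale transfer_fibre =
  fixes A :: "'a \<Rightarrow> nat \<Rightarrow> nat \<Rightarrow> bool" and \<theta> :: "'a \<Rightarrow> 'a"
    and \<phi> :: "'a \<Rightarrow> (nat \<Rightarrow> nat) \<Rightarrow> real" and y :: 'a
  assumes summable_weights: "\<And>w. w \<in> Efib A \<theta> (\<theta> y) \<Longrightarrow>
     (\<lambda>e. exp (\<phi> y (case_nat e w))) summable_on {e. A y e (w 0)}"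
begin

abbreviation "S \<equiv> Efib A \<theta> y"
abbreviation "S' \<equiv> Efib A \<theta> (\<theta> y)"

lemma case_nat_in_S: "w \<in> S' \<Longrightarrow> e \<in> {e. A y e (w 0)} \<Longrightarrow> case_nat e w \<in> S"
  by (simp add: Efib_cons_iff)

lemma summable_norm_terms:
  assumes g: "\<And>v. v \<in> S \<Longrightarrow> \<bar>g v\<bar> \<le> G" and w: "w \<in> S'"
  shows "(\<lambda>e. norm (g (case_nat e w) * exp (\<phi> y (case_nat e w)))) summable_on {e. A y e (w 0)}"
proof (rule summable_on_comparison_test)
  show "(\<lambda>e. G * exp (\<phi> y (case_nat e w))) summable_on {e. A y e (w 0)}"
    by (rule summable_on_cmult_right[OF summable_weights[OF w]])
  fix e assume "e \<in> {e. A y e (w 0)}"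
  then show "norm (g (case_nat e w) * exp (\<phi> y (case_nat e w))) \<le> G * exp (\<phi> y (case_nat e w))"
    using g case_nat_in_S w by (simp add: abs_mult)
qed simp

lemma summable_terms:
  assumes "\<And>v. v \<in> S \<Longrightarrow> \<bar>g v\<bar> \<le> G" and "w \<in> S'"
  shows "(\<lambda>e. g (case_nat e w) * exp (\<phi> y (case_nat e w))) summable_on {e. A y e (w 0)}"
  using summable_norm_terms[OF assms] by (rule abs_summable_summable)

lemma Lop_add:
  assumes "\<And>v. v \<in> S \<Longrightarrow> \<bar>g v\<bar> \<le> G" "\<And>v. v \<in> S \<Longrightarrow> \<bar>h v\<bar> \<le> H" "w \<in> S'"
  shows "Lop A \<phi> y (\<lambda>v. g v + h v) w = Lop A \<phi> y g w + Lop A \<phi> y h w"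
  unfolding Lop_def distrib_right
  by (rule infsum_add[OF summable_terms summable_terms]) (use assms in auto)

lemma Lop_cmult: "Lop A \<phi> y (\<lambda>v. c * g v) w = c * Lop A \<phi> y g w"
  unfolding Lop_def mult.assoc
  by (cases "c = 0") (auto simp: infsum_cmult_right')

lemma Lop_mono:
  assumes "\<And>v. v \<in> S \<Longrightarrow> \<bar>g v\<bar> \<le> G" "\<And>v. v \<in> S \<Longrightarrow> \<bar>h v\<bar> \<le> H" "w \<in> S'"
    and "\<And>v. v \<in> S \<Longrightarrow> g v \<le> h v"
  shows "Lop A \<phi> y g w \<le> Lop A \<phi> y h w"
  unfolding Lop_def
  by (rule infsum_mono[OF summable_terms summable_terms])
    (use assms case_nat_in_S in auto)

lemma Lop_nonneg:
  assumes "\<And>v. v \<in> S \<Longrightarrow> 0 \<le> g v" "w \<in> S'"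
  shows "0 \<le> Lop A \<phi> y g w"
  unfolding Lop_def using assms case_nat_in_S by (intro infsum_nonneg) auto

lemma abs_Lop_le:
  assumes "\<And>v. v \<in> S \<Longrightarrow> \<bar>g v\<bar> \<le> h v" "\<And>v. v \<in> S \<Longrightarrow> \<bar>h v\<bar> \<le> H" "w \<in> S'"
  shows "\<bar>Lop A \<phi> y g w\<bar> \<le> Lop A \<phi> y h w"
proof -
  have g: "\<And>v. v \<in> S \<Longrightarrow> \<bar>g v\<bar> \<le> H" using assms by force
  have "\<bar>Lop A \<phi> y g w\<bar> \<le> (\<Sum>\<^sub>\<infinity>e\<in>{e. A y e (w 0)}. norm (g (case_nat e w) * exp (\<phi> y (case_nat e w))))"
    unfolding Lop_def using norm_infsum_bound[OF summable_norm_terms[OF g assms(3)]] by simp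
  also have "\<dots> \<le> Lop A \<phi> y h w"
    unfolding Lop_def
    by (rule infsum_mono[OF summable_norm_terms[OF g assms(3)] summable_terms[OF assms(2,3)]])
      (use assms case_nat_in_S in \<open>auto simp: abs_mult\<close>)
  finally show ?thesis .
qed

lemma term_le_Lop:
  assumes "\<And>v. v \<in> S \<Longrightarrow> 0 \<le> g v" "\<And>v. v \<in> S \<Longrightarrow> g v \<le> G" "w \<in> S'" "A y a (w 0)"
  shows "g (case_nat a w) * exp (\<phi> y (case_nat a w)) \<le> Lop A \<phi> y g w"
proof -
  have "(\<Sum>\<^sub>\<infinity>e\<in>{a}. g (case_nat e w) * exp (\<phi> y (case_nat e w))) \<le> Lop A \<phi> y g w"
    unfolding Lop_def
    by (rule infsum_mono_neutral[OF _ summable_terms[of g G]])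
      (use assms case_nat_in_S in auto)
  then show ?thesis by simp
qed

lemma Lop_indicator_compl_cyl:
  assumes "w \<in> S'"
  shows "Lop A \<phi> y (indicator (S - cyl A \<theta> y B)) w = (\<Sum>\<^sub>\<infinity>e\<in>{e. A y e (w 0)} - B. exp (\<phi> y (case_nat e w)))"
  unfolding Lop_def
  by (rule infsum_cong_neutral) (use assms case_nat_in_S in \<open>auto simp: cyl_def indicator_def\<close>)

lemma Lop_split:
  assumes "\<And>v. v \<in> S \<Longrightarrow> \<bar>g v\<bar> \<le> G" and "w \<in> S'"
  shows "Lop A \<phi> y g w = (\<Sum>e\<in>{e. A y e (w 0)} \<inter> {..l}. g (case_nat e w) * exp (\<phi> y (case_nat e w)))
     + (\<Sum>\<^sub>\<infinity>e\<in>{e. A y e (w 0)} - {..l}. g (case_nat e w) * exp (\<phi> y (case_nat e w)))"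
proof -
  let ?f = "\<lambda>e. g (case_nat e w) * exp (\<phi> y (case_nat e w))"
  have s: "?f summable_on {e. A y e (w 0)}" by (rule summable_terms[OF assms])
  have "Lop A \<phi> y g w = infsum ?f (({e. A y e (w 0)} \<inter> {..l}) \<union> ({e. A y e (w 0)} - {..l}))"
    unfolding Lop_def by (rule arg_cong[where f="infsum ?f"]) auto
  also have "\<dots> = infsum ?f ({e. A y e (w 0)} \<inter> {..l}) + infsum ?f ({e. A y e (w 0)} - {..l})"
    by (rule infsum_Un_disjoint) (auto intro: summable_on_subset[OF s])
  finally show ?thesis by simp
qed

lemma abs_tail_le:
  assumes g: "\<And>v. v \<in> S \<Longrightarrow> \<bar>g v\<bar> \<le> G" and w: "w \<in> S'"
  shows "\<bar>\<Sum>\<^sub>\<infinity>e\<in>{e. A y e (w 0)} - B. g (case_nat e w) * exp (\<phi> y (case_nat e w))\<bar>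
     \<le> G * (\<Sum>\<^sub>\<infinity>e\<in>{e. A y e (w 0)} - B. exp (\<phi> y (case_nat e w)))"
proof -
  let ?T = "{e. A y e (w 0)} - B"
  let ?f = "\<lambda>e. g (case_nat e w) * exp (\<phi> y (case_nat e w))"
  have s1: "(\<lambda>e. norm (?f e)) summable_on ?T"
    by (rule summable_on_subset[OF summable_norm_terms[OF g w]]) auto
  have s2: "(\<lambda>e. exp (\<phi> y (case_nat e w))) summable_on ?T"
    by (rule summable_on_subset[OF summable_weights[OF w]]) auto
  have "\<bar>infsum ?f ?T\<bar> \<le> infsum (\<lambda>e. norm (?f e)) ?T"
    using norm_infsum_bound[OF s1] by simp
  also have "\<dots> \<le> infsum (\<lambda>e. G * exp (\<phi> y (case_nat e w))) ?T"
    by (rule infsum_mono[OF s1 summable_on_cmult_right[OF s2]])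
      (use g w case_nat_in_S in \<open>auto simp: abs_mult\<close>)
  also have "\<dots> = G * infsum (\<lambda>e. exp (\<phi> y (case_nat e w))) ?T"
    by (rule infsum_cmult_right) (use s2 in auto)
  finally show ?thesis .
qed

lemma Lop_le_cmult_Lop:
  assumes g: "\<And>v. v \<in> S \<Longrightarrow> \<bar>g v\<bar> \<le> G" and \<tau>: "\<tau> \<in> S'" "\<tau>' \<in> S'" "\<tau> 0 = \<tau>' 0"
    and le: "\<And>e. A y e (\<tau> 0) \<Longrightarrow>
      g (case_nat e \<tau>) * exp (\<phi> y (case_nat e \<tau>)) \<le> D * (g (case_nat e \<tau>') * exp (\<phi> y (case_nat e \<tau>')))"
  shows "Lop A \<phi> y g \<tau> \<le> D * Lop A \<phi> y g \<tau>'"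
proof -
  have s': "(\<lambda>e. g (case_nat e \<tau>') * exp (\<phi> y (case_nat e \<tau>'))) summable_on {e. A y e (\<tau> 0)}"
    using summable_terms[OF g \<tau>(2)] \<tau>(3) by simp
  have "Lop A \<phi> y g \<tau> \<le> (\<Sum>\<^sub>\<infinity>e\<in>{e. A y e (\<tau> 0)}. D * (g (case_nat e \<tau>') * exp (\<phi> y (case_nat e \<tau>'))))"
    unfolding Lop_def
    by (rule infsum_mono[OF summable_terms[OF g \<tau>(1)] summable_on_cmult_right[OF s']]) (use le in auto)
  also have "\<dots> = D * Lop A \<phi> y g \<tau>'"
    unfolding Lop_def \<tau>(3) by (rule infsum_cmult_right) (use s' \<tau>(3) in simp)
  finally show ?thesis .
qed

lemma abs_Lop_le_mult:
  assumes "\<And>v. v \<in> S \<Longrightarrow> \<bar>g v\<bar> \<le> G" "0 \<le> G" "t \<in> S'" "Lop A \<phi> y (\<lambda>_. 1) t \<le> B"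
  shows "\<bar>Lop A \<phi> y g t\<bar> \<le> G * B"
proof -
  have "\<bar>Lop A \<phi> y g t\<bar> \<le> Lop A \<phi> y (\<lambda>_. G * 1) t"
    by (rule abs_Lop_le[of g _ G]) (use assms in auto)
  also have "\<dots> = G * Lop A \<phi> y (\<lambda>_. 1) t" by (rule Lop_cmult)
  also have "\<dots> \<le> G * B" using assms(2,4) by (rule mult_left_mono[rotated])
  finally show ?thesis .
qed

lemma tendsto_finite_part:
  assumes g: "dcont_on S g" and \<phi>: "dcont_on S (\<phi> y)" and w: "w \<in> S'"
    and E: "\<And>e. e \<in> E \<Longrightarrow> A y e (w 0)"
  shows "((\<lambda>t. \<Sum>e\<in>E. g (case_nat e t) * exp (\<phi> y (case_nat e t))) \<longlongrightarrow>
          (\<Sum>e\<in>E. g (case_nat e w) * exp (\<phi> y (case_nat e w)))) (cyl_nhds S' w)"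
proof (intro tendsto_sum tendsto_mult tendsto_exp)
  fix e assume "e \<in> E"
  then have ew: "case_nat e w \<in> S"
    and lim: "filterlim (case_nat e) (cyl_nhds S (case_nat e w)) (cyl_nhds S' w)"
    using E w case_nat_in_S by (auto intro!: filterlim_case_nat_cyl_nhds)
  show "((\<lambda>t. g (case_nat e t)) \<longlongrightarrow> g (case_nat e w)) (cyl_nhds S' w)"
    using g ew filterlim_compose[OF _ lim] unfolding dcont_on_iff_tendsto by blast
  show "((\<lambda>t. \<phi> y (case_nat e t)) \<longlongrightarrow> \<phi> y (case_nat e w)) (cyl_nhds S' w)"
    using \<phi> ew filterlim_compose[OF _ lim] unfolding dcont_on_iff_tendsto by blast
qed

text \<open>The letters up to l contribute a finite, hence continuous, sum; the tail beyond l is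
  uniformly small.\<close>

lemma Lop_Cb:
  assumes \<phi>: "dcont_on S (\<phi> y)"
    and tail: "\<And>\<epsilon>. \<epsilon> > 0 \<Longrightarrow> \<exists>l. \<forall>t\<in>S'. Lop A \<phi> y (indicator (S - cyl A \<theta> y {..l})) t \<le> \<epsilon>"
    and bounded: "\<And>t. t \<in> S' \<Longrightarrow> Lop A \<phi> y (\<lambda>_. 1) t \<le> B"
    and g: "g \<in> Cb S"
  shows "Lop A \<phi> y g \<in> Cb S'"
proof -
  obtain G0 where "\<forall>v\<in>S. \<bar>g v\<bar> \<le> G0" using g unfolding Cb_def by blast
  then obtain G where G: "\<And>v. v \<in> S \<Longrightarrow> \<bar>g v\<bar> \<le> G" and "G \<ge> 0"
    by (metis max.cobounded2 max.coboundedI1)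
  have bound: "\<bar>Lop A \<phi> y g t\<bar> \<le> G * B" if "t \<in> S'" for t
    using abs_Lop_le_mult[OF G \<open>G \<ge> 0\<close> that bounded[OF that]] .
  have "(Lop A \<phi> y g \<longlongrightarrow> Lop A \<phi> y g w) (cyl_nhds S' w)" if w: "w \<in> S'" for w
  proof (rule tendstoI)
    fix \<epsilon> :: real assume "\<epsilon> > 0"
    then obtain l where l: "\<forall>t\<in>S'. Lop A \<phi> y (indicator (S - cyl A \<theta> y {..l})) t \<le> \<epsilon> / (4 * (G + 1))"
      using tail[of "\<epsilon> / (4 * (G + 1))"] \<open>G \<ge> 0\<close> by auto
    let ?tail = "\<lambda>t. \<Sum>\<^sub>\<infinity>e\<in>{e. A y e (t 0)} - {..l}. g (case_nat e t) * exp (\<phi> y (case_nat e t))"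
    let ?head = "\<lambda>t. \<Sum>e\<in>{e. A y e (w 0)} \<inter> {..l}. g (case_nat e t) * exp (\<phi> y (case_nat e t))"
    have small_tail: "\<bar>?tail t\<bar> \<le> \<epsilon> / 4" if t: "t \<in> S'" for t
    proof -
      have "\<bar>?tail t\<bar> \<le> G * Lop A \<phi> y (indicator (S - cyl A \<theta> y {..l})) t"
        using abs_tail_le[OF G t] Lop_indicator_compl_cyl[OF t] by simp
      also have "\<dots> \<le> G * (\<epsilon> / (4 * (G + 1)))"
        using l t \<open>G \<ge> 0\<close> by (intro mult_left_mono) auto
      also have "\<dots> \<le> \<epsilon> / 4" using \<open>G \<ge> 0\<close> \<open>\<epsilon> > 0\<close> by (simp add: field_simps)
      finally show ?thesis .
    qed
    have "eventually (\<lambda>t. dist (?head t) (?head w) < \<epsilon> / 2) (cyl_nhds S' w)"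
    proof (rule tendstoD)
      show "(?head \<longlongrightarrow> ?head w) (cyl_nhds S' w)"
        by (rule tendsto_finite_part) (use g \<phi> w in \<open>auto simp: Cb_def\<close>)
    qed (use \<open>\<epsilon> > 0\<close> in simp)
    moreover have "eventually (\<lambda>t. t \<in> S' \<and> t 0 = w 0) (cyl_nhds S' w)"
      unfolding eventually_cyl_nhds by (intro exI[of _ 0]) auto
    ultimately show "eventually (\<lambda>t. dist (Lop A \<phi> y g t) (Lop A \<phi> y g w) < \<epsilon>) (cyl_nhds S' w)"
    proof eventually_elim
      case (elim t)
      then have "Lop A \<phi> y g t = ?head t + ?tail t" "Lop A \<phi> y g w = ?head w + ?tail w"
        using Lop_split[OF G, where l=l] w by simp_all
      then show ?case using elim small_tail[of t] small_tail[OF w] unfolding dist_real_def by linarith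
    qed
  qed
  then show ?thesis unfolding Cb_def dcont_on_iff_tendsto using bound by blast
qed

lemma Lop_one_le_if_tail_le_1:
  assumes C: "\<And>e v. e \<le> l \<Longrightarrow> v \<in> cyl A \<theta> y {e} \<Longrightarrow> exp (\<phi> y v) \<le> C e"
    and tail: "Lop A \<phi> y (indicator (S - cyl A \<theta> y {..l})) t \<le> 1" and t: "t \<in> S'"
  shows "Lop A \<phi> y (\<lambda>_. 1) t \<le> (\<Sum>e\<le>l. max (C e) 0) + 1"
proof -
  have "(\<Sum>e\<in>{e. A y e (t 0)} \<inter> {..l}. 1 * exp (\<phi> y (case_nat e t)))
      \<le> (\<Sum>e\<in>{e. A y e (t 0)} \<inter> {..l}. max (C e) 0)"
  proof (rule sum_mono)
    fix e assume "e \<in> {e. A y e (t 0)} \<inter> {..l}"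
    then have "e \<le> l" "case_nat e t \<in> cyl A \<theta> y {e}" using t by (auto simp: cyl_def Efib_cons_iff)
    then show "1 * exp (\<phi> y (case_nat e t)) \<le> max (C e) 0" using C by force
  qed
  also have "\<dots> \<le> (\<Sum>e\<le>l. max (C e) 0)"
    by (rule sum_mono2) auto
  finally show ?thesis
    using Lop_split[where g="\<lambda>_. 1" and G=1 and l=l, OF _ t] Lop_indicator_compl_cyl[OF t] tail
    by simp
qed

lemma successor_letter_less:
  assumes \<rho>: "\<rho> \<in> S'" and a: "A y a (\<rho> 0)" and c: "c \<le> exp (\<phi> y (case_nat a \<rho>))"
    and small: "\<And>e v. eb \<le> e \<Longrightarrow> v \<in> cyl A \<theta> (\<theta> y) {e} \<Longrightarrow> Lop A \<phi> y (\<lambda>_. 1) v \<le> \<epsilon>"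
    and "\<epsilon> < c"
  shows "\<rho> 0 < eb"
proof (rule ccontr)
  assume "\<not> \<rho> 0 < eb"
  then have "Lop A \<phi> y (\<lambda>_. 1) \<rho> \<le> \<epsilon>" using small \<rho> by (simp add: cyl_def)
  moreover have "1 * exp (\<phi> y (case_nat a \<rho>)) \<le> Lop A \<phi> y (\<lambda>_. 1) \<rho>"
    by (rule term_le_Lop[where G=1]) (use \<rho> a in auto)
  ultimately show False using c \<open>\<epsilon> < c\<close> by simp
qed

end

lemma (in prob_space) exists_le_if_integral_less:
  assumes B: "B \<in> events" and f: "integrable M f" "\<And>x. x \<in> space M \<Longrightarrow> 0 \<le> f x"
    and less: "(\<integral>x. f x \<partial>M) < c * prob B"
  shows "\<exists>x\<in>B. f x \<le> c"
proof (rule ccontr)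
  assume "\<not> ?thesis"
  then have gt: "\<And>x. x \<in> B \<Longrightarrow> c < f x" by force
  have "c * prob B = (\<integral>x. c * indicator B x \<partial>M)"
    using B by simp
  also have "\<dots> \<le> (\<integral>x. f x \<partial>M)"
  proof (rule integral_mono[OF _ f(1)])
    show "integrable M (\<lambda>x. c * indicator B x)"
      using B by (intro integrable_mult_right integrable_real_indicator) (auto simp: less_top[symmetric])
    show "c * indicator B x \<le> f x" if "x \<in> space M" for x
      using gt[of x] f(2)[OF that] by (cases "x \<in> B") auto
  qed
  finally show False using less by simp
qed

lemma (in finite_measure) exists_measure_ge_average:
  assumes "finite I" "I \<noteq> {}" "\<And>i. i \<in> I \<Longrightarrow> B i \<in> sets M"
  shows "\<exists>i\<in>I. measure M (\<Union>i\<in>I. B i) / card I \<le> measure M (B i)"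
proof (rule ccontr)
  assume "\<not> ?thesis"
  then have "\<And>i. i \<in> I \<Longrightarrow> measure M (B i) < measure M (\<Union>i\<in>I. B i) / card I" by force
  then have "(\<Sum>i\<in>I. measure M (B i)) < (\<Sum>i\<in>I. measure M (\<Union>i\<in>I. B i) / card I)"
    by (rule sum_strict_mono[OF assms(1,2)])
  also have "\<dots> = measure M (\<Union>i\<in>I. B i)"
    using assms(1,2) by simp
  moreover have "measure M (\<Union>i\<in>I. B i) \<le> (\<Sum>i\<in>I. measure M (B i))"
    using finite_measure_subadditive_finite[OF assms(1)] assms(3) by blast
  ultimately show False by simp
qed

fun letter_bound :: "(nat \<Rightarrow> nat) \<Rightarrow> nat \<Rightarrow> nat \<Rightarrow> nat" where
  "letter_bound nb e 0 = Suc e"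
| "letter_bound nb e (Suc k) = Max (nb ` {..<letter_bound nb e k})"

lemma less_letter_bound:
  assumes "\<And>j. u (Suc j) < nb (u j)"
  shows "u k < letter_bound nb (u 0) k"
proof (induction k)
  case (Suc k)
  have "u (Suc k) < nb (u k)" by (rule assms)
  also have "\<dots> \<le> Max (nb ` {..<letter_bound nb (u 0) k})"
    using Suc by (intro Max_ge) auto
  finally show ?case by simp
qed simp

section \<open>Uniform bounds along a single orbit\<close>

text \<open>The hypotheses along the orbit of one point x, with constants independent of x: BL bounds
  the transfer operator on 1, c e bounds e^\<phi> from below on [e], next_bound a bounds the letters
  that can follow a, and Nm is a mixing time.\<close>

locale fine_orbit =
  fixes A :: "'a \<Rightarrow> nat \<Rightarrow> nat \<Rightarrow> bool" and \<theta> :: "'a \<Rightarrow> 'a"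
    and \<phi> :: "'a \<Rightarrow> (nat \<Rightarrow> nat) \<Rightarrow> real" and lam :: "'a \<Rightarrow> real"
    and \<nu> :: "'a \<Rightarrow> (nat \<Rightarrow> nat) measure" and x :: 'a
    and \<alpha> V K \<kappa> BL :: real and F :: "nat set" and c :: "nat \<Rightarrow> real"
    and next_bound :: "nat \<Rightarrow> nat" and Nm :: "nat \<Rightarrow> nat \<Rightarrow> nat"
  assumes summable_weights: "\<And>i w. w \<in> Efib A \<theta> (\<theta> ((\<theta>^^i) x)) \<Longrightarrow>
        (\<lambda>e. exp (\<phi> ((\<theta>^^i) x) (case_nat e w))) summable_on {e. A ((\<theta>^^i) x) e (w 0)}"
    and phi_cont: "\<And>i. dcont_on (Efib A \<theta> ((\<theta>^^i) x)) (\<phi> ((\<theta>^^i) x))"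
    and tail_small: "\<And>i \<epsilon>. \<epsilon> > 0 \<Longrightarrow> \<exists>l. \<forall>t\<in>Efib A \<theta> (\<theta> ((\<theta>^^i) x)).
        Lop A \<phi> ((\<theta>^^i) x) (indicator (Efib A \<theta> ((\<theta>^^i) x) - cyl A \<theta> ((\<theta>^^i) x) {..l})) t \<le> \<epsilon>"
    and Lop_one_le: "\<And>i t. t \<in> Efib A \<theta> (\<theta> ((\<theta>^^i) x)) \<Longrightarrow> Lop A \<phi> ((\<theta>^^i) x) (\<lambda>_. 1) t \<le> BL"
    and alpha_pos: "0 < \<alpha>" and V_nonneg: "0 \<le> V"
    and holder: "\<And>i t w. t \<in> Efib A \<theta> ((\<theta>^^i) x) \<Longrightarrow> w \<in> Efib A \<theta> ((\<theta>^^i) x) \<Longrightarrow> t 0 = w 0 \<Longrightarrow>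
        \<bar>\<phi> ((\<theta>^^i) x) t - \<phi> ((\<theta>^^i) x) w\<bar> \<le> V * dseq t w powr \<alpha>"
    and c_pos: "\<And>e. 0 < c e"
    and exp_phi_ge: "\<And>i e w. w \<in> cyl A \<theta> ((\<theta>^^i) x) {e} \<Longrightarrow> c e \<le> exp (\<phi> ((\<theta>^^i) x) w)"
    and successor_less: "\<And>i a \<rho>. \<rho> \<in> Efib A \<theta> (\<theta> ((\<theta>^^i) x)) \<Longrightarrow> A ((\<theta>^^i) x) a (\<rho> 0) \<Longrightarrow>
        \<rho> 0 < next_bound a"
    and kappa: "0 < \<kappa>" "\<kappa> < 1/4" and finite_F: "finite F"
    and condC: "\<And>i w w'. w \<in> Efib A \<theta> (\<theta> ((\<theta>^^i) x)) \<Longrightarrow> w' \<in> cyl A \<theta> (\<theta> ((\<theta>^^i) x)) F \<Longrightarrow>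
        Lop A \<phi> ((\<theta>^^i) x) (indicator (Efib A \<theta> ((\<theta>^^i) x) - cyl A \<theta> ((\<theta>^^i) x) F)) w
          \<le> \<kappa> * Lop A \<phi> ((\<theta>^^i) x) (\<lambda>_. 1) w'"
    and conformal: "\<And>i g. g \<in> Cb (Efib A \<theta> ((\<theta>^^i) x)) \<Longrightarrow>
        (\<integral>w. Lop A \<phi> ((\<theta>^^i) x) g w \<partial>\<nu> (\<theta> ((\<theta>^^i) x))) = lam ((\<theta>^^i) x) * (\<integral>w. g w \<partial>\<nu> ((\<theta>^^i) x))"
    and lam_pos: "\<And>i. 0 < lam ((\<theta>^^i) x)"
    and abs_ln_lam_le: "\<And>i. \<bar>ln (lam ((\<theta>^^i) x))\<bar> \<le> K"
    and prob_space_nu: "\<And>i. prob_space (\<nu> ((\<theta>^^i) x))"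
    and sets_nu: "\<And>i. sets (\<nu> ((\<theta>^^i) x)) = sets (restrict_space seqM (Efib A \<theta> ((\<theta>^^i) x)))"
    and measure_cyl_F: "\<And>i. 1/2 \<le> measure (\<nu> ((\<theta>^^i) x)) (cyl A \<theta> ((\<theta>^^i) x) F)"
    and mixing: "\<And>a b n i. Nm a b \<le> n \<Longrightarrow> \<exists>w. w 0 = a \<and> w (n + 2) = b \<and>
        (\<forall>j<n + 2. A ((\<theta>^^(i + j)) x) (w j) (w (Suc j)))"
begin

abbreviation "y i \<equiv> (\<theta>^^i) x"
abbreviation "S i \<equiv> Efib A \<theta> (y i)"
abbreviation "Lhn n g \<equiv> Lhat_pow A \<theta> \<phi> lam n x g"
abbreviation "h n \<equiv> Lhn n (\<lambda>_. 1)"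

sublocale fibre: transfer_fibre A \<theta> \<phi> "y i" for i
  by unfold_locales (rule summable_weights)

lemma Lhn_Suc: "Lhn (Suc n) g = (\<lambda>w. Lop A \<phi> (y n) (Lhn n g) w / lam (y n))"
  by (rule ext) (simp add: Lhat_def)

lemma Lhn_Cb: "g \<in> Cb (S 0) \<Longrightarrow> Lhn n g \<in> Cb (S n)"
proof (induction n)
  case (Suc n)
  have "Lop A \<phi> (y n) (Lhn n g) \<in> Cb (Efib A \<theta> (\<theta> (y n)))"
    by (rule fibre.Lop_Cb[OF phi_cont tail_small Lop_one_le Suc.IH[OF Suc.prems]]) auto
  then show ?case unfolding Lhn_Suc by (simp add: Cb_divide)
qed simp

lemma h_bounded: "\<exists>B. \<forall>w\<in>S n. \<bar>h n w\<bar> \<le> B"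
  using Lhn_Cb[OF Cb_const] unfolding Cb_def by blast

lemma h_nonneg: "w \<in> S n \<Longrightarrow> 0 \<le> h n w"
proof (induction n arbitrary: w)
  case (Suc n)
  have "0 \<le> Lop A \<phi> (y n) (h n) w" by (rule fibre.Lop_nonneg) (use Suc in auto)
  then show ?case unfolding Lhn_Suc using lam_pos[of n] by simp
qed simp

lemma integral_h: "(\<integral>w. h n w \<partial>\<nu> (y n)) = 1"
proof (induction n)
  case 0
  then show ?case using prob_space.prob_space[OF prob_space_nu[of 0]] by simp
next
  case (Suc n)
  have "(\<integral>w. h (Suc n) w \<partial>\<nu> (y (Suc n))) = (\<integral>w. Lop A \<phi> (y n) (h n) w \<partial>\<nu> (\<theta> (y n))) / lam (y n)"
    unfolding Lhn_Suc by simp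
  also have "\<dots> = 1" using conformal[OF Lhn_Cb[OF Cb_const]] Suc lam_pos[of n] by simp
  finally show ?case .
qed

lemma integrable_h: "integrable (\<nu> (y n)) (h n)"
  using integral_h[of n] not_integrable_integral_eq by fastforce

lemma space_nu: "space (\<nu> (y i)) = S i"
  using sets_eq_imp_space_eq[OF sets_nu[of i]] by (simp add: space_restrict_space seqM_def space_PiM)

lemma cyl_in_sets_nu: "cyl A \<theta> (y i) B \<in> sets (\<nu> (y i))"
proof -
  have "(\<lambda>t::nat\<Rightarrow>nat. t 0) \<in> seqM \<rightarrow>\<^sub>M count_space UNIV"
    unfolding seqM_def by (rule measurable_component_singleton) simp
  then have "{t::nat\<Rightarrow>nat. t 0 \<in> B} \<in> sets seqM"
    using measurable_sets[of _ seqM "count_space UNIV" B] by (simp add: seqM_def space_PiM vimage_def)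
  moreover have "cyl A \<theta> (y i) B = S i \<inter> {t. t 0 \<in> B}" by (auto simp: cyl_def)
  ultimately show ?thesis by (simp add: sets_nu sets_restrict_space)
qed

text \<open>The exponent is the fixed point of a \<mapsto> (a + V) e^{-\<alpha>}, which is what makes the
  distortion estimate propagate from one step to the next.\<close>

definition distortion_exponent :: real where
  "distortion_exponent = V * exp (- \<alpha>) / (1 - exp (- \<alpha>))"

lemma distortion_exponent_fixed_point:
  "(distortion_exponent + V) * exp (- \<alpha>) = distortion_exponent"
  using alpha_pos unfolding distortion_exponent_def by (simp add: field_simps)

lemma distortion_exponent_nonneg: "0 \<le> distortion_exponent"
  using alpha_pos V_nonneg unfolding distortion_exponent_def by simp

lemma h_distortion:
  assumes "\<tau> \<in> S n" "\<tau>' \<in> S n" "\<tau> 0 = \<tau>' 0"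
  shows "h n \<tau> \<le> exp (distortion_exponent * dseq \<tau> \<tau>' powr \<alpha>) * h n \<tau>'"
  using assms
proof (induction n arbitrary: \<tau> \<tau>')
  case 0
  then show ?case using distortion_exponent_nonneg by (simp add: dseq_nonneg)
next
  case (Suc n)
  let ?a = distortion_exponent and ?d = "dseq \<tau> \<tau>' powr \<alpha>"
  have \<tau>: "\<tau> \<in> Efib A \<theta> (\<theta> (y n))" and \<tau>': "\<tau>' \<in> Efib A \<theta> (\<theta> (y n))"
    using Suc.prems by auto
  obtain B where B: "\<forall>w\<in>S n. \<bar>h n w\<bar> \<le> B" using h_bounded by blast
  have term_le: "h n (case_nat e \<tau>) * exp (\<phi> (y n) (case_nat e \<tau>))
      \<le> exp (?a * ?d) * (h n (case_nat e \<tau>') * exp (\<phi> (y n) (case_nat e \<tau>')))"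
    if "A (y n) e (\<tau> 0)" for e
  proof -
    have e: "case_nat e \<tau> \<in> S n" "case_nat e \<tau>' \<in> S n"
      using that \<tau> \<tau>' Suc.prems(3) by (auto simp: Efib_cons_iff)
    have d: "dseq (case_nat e \<tau>) (case_nat e \<tau>') powr \<alpha> = exp (- \<alpha>) * ?d"
      by (rule dseq_case_nat_powr)
    have "h n (case_nat e \<tau>) \<le> exp (?a * (exp (- \<alpha>) * ?d)) * h n (case_nat e \<tau>')"
      using Suc.IH[OF e] d by simp
    moreover have "exp (\<phi> (y n) (case_nat e \<tau>)) \<le> exp (V * (exp (- \<alpha>) * ?d)) * exp (\<phi> (y n) (case_nat e \<tau>'))"
      using holder[OF e] d by (simp add: mult_exp_exp)
    ultimately have "h n (case_nat e \<tau>) * exp (\<phi> (y n) (case_nat e \<tau>))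
        \<le> (exp (?a * (exp (- \<alpha>) * ?d)) * h n (case_nat e \<tau>'))
          * (exp (V * (exp (- \<alpha>) * ?d)) * exp (\<phi> (y n) (case_nat e \<tau>')))"
      by (rule mult_mono) (use h_nonneg[OF e(2)] in auto)
    also have "\<dots> = exp ((?a + V) * exp (- \<alpha>) * ?d) * (h n (case_nat e \<tau>') * exp (\<phi> (y n) (case_nat e \<tau>')))"
      by (simp add: mult_exp_exp algebra_simps)
    finally show ?thesis unfolding distortion_exponent_fixed_point .
  qed
  have "Lop A \<phi> (y n) (h n) \<tau> \<le> exp (?a * ?d) * Lop A \<phi> (y n) (h n) \<tau>'"
    by (rule fibre.Lop_le_cmult_Lop[OF _ \<tau> \<tau>' Suc.prems(3) term_le]) (use B in auto)
  then show ?case unfolding Lhn_Suc using lam_pos[of n] by (simp add: divide_right_mono)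
qed

lemma h_le_same_letter:
  assumes "\<tau> \<in> S n" "\<tau>' \<in> S n" "\<tau> 0 = \<tau>' 0"
  shows "h n \<tau> \<le> exp distortion_exponent * h n \<tau>'"
proof -
  have "dseq \<tau> \<tau>' powr \<alpha> \<le> 1"
    using dseq_le_1[of \<tau> \<tau>'] dseq_nonneg[of \<tau> \<tau>'] alpha_pos by (simp add: powr_le1)
  then have "exp (distortion_exponent * dseq \<tau> \<tau>' powr \<alpha>) \<le> exp distortion_exponent"
    using distortion_exponent_nonneg by (simp add: mult_left_le)
  then show ?thesis
    using h_distortion[OF assms] h_nonneg[OF assms(2)] by (meson mult_right_mono order.trans)
qed

lemma lam_le_exp_K: "lam (y j) \<le> exp K"
  using abs_ln_lam_le[of j] lam_pos[of j] by (metis abs_le_D1 exp_le_cancel_iff exp_ln)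

lemma inverse_lam_le_exp_K: "1 / lam (y j) \<le> exp K"
proof -
  have "exp (- K) \<le> lam (y j)"
    using abs_ln_lam_le[of j] lam_pos[of j] by (metis abs_le_D2 exp_le_cancel_iff exp_ln minus_le_iff)
  then show ?thesis using lam_pos[of j] by (simp add: exp_minus field_simps)
qed

lemma h_case_nat_le:
  assumes \<rho>: "\<rho> \<in> Efib A \<theta> (\<theta> (y j))" and a: "A (y j) a (\<rho> 0)"
  shows "h j (case_nat a \<rho>) \<le> exp K / c a * h (Suc j) \<rho>"
proof -
  obtain B where B: "\<forall>w\<in>S j. \<bar>h j w\<bar> \<le> B" using h_bounded by blast
  have a\<rho>: "case_nat a \<rho> \<in> cyl A \<theta> (y j) {a}" using \<rho> a by (simp add: cyl_def Efib_cons_iff)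
  then have a\<rho>S: "case_nat a \<rho> \<in> S j" by (simp add: cyl_def)
  have "h j (case_nat a \<rho>) * c a \<le> h j (case_nat a \<rho>) * exp (\<phi> (y j) (case_nat a \<rho>))"
    using exp_phi_ge[OF a\<rho>] h_nonneg[OF a\<rho>S] by (rule mult_left_mono)
  also have "\<dots> \<le> Lop A \<phi> (y j) (h j) \<rho>"
    by (rule fibre.term_le_Lop[where G=B]) (use \<rho> a B h_nonneg in auto)
  also have "\<dots> = lam (y j) * h (Suc j) \<rho>" unfolding Lhn_Suc using lam_pos[of j] by simp
  also have "\<dots> \<le> exp K * h (Suc j) \<rho>"
    using lam_le_exp_K[of j] h_nonneg[of \<rho> "Suc j"] \<rho> by (intro mult_right_mono) auto
  finally show ?thesis using c_pos[of a] by (simp add: field_simps)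
qed

lemma h_le_shift:
  assumes "w \<in> S n" and c_min: "0 < c_min" "\<And>k. k < L \<Longrightarrow> c_min \<le> c (w k)"
  shows "h n w \<le> (exp K / c_min) ^ L * h (n + L) (\<lambda>i. w (i + L))"
  using assms
proof (induction L arbitrary: n w)
  case (Suc L)
  let ?R = "exp K / c_min" and ?w1 = "\<lambda>i. w (i + 1)"
  have w1: "?w1 \<in> Efib A \<theta> (\<theta> (y n))" using Efib_shift[OF Suc.prems(1), of 1] by simp
  have "A (y n) (w 0) (?w1 0)"
    using Suc.prems(1)[unfolded Efib_funpow_iff, rule_format, of 0] by simp
  have "h n w = h n (case_nat (w 0) ?w1)"
    by (rule arg_cong[where f="h n"]) (simp add: fun_eq_iff split: nat.split)
  also have "\<dots> \<le> exp K / c (w 0) * h (Suc n) ?w1"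
    by (rule h_case_nat_le[OF w1]) fact
  also have "\<dots> \<le> ?R * h (Suc n) ?w1"
    using Suc.prems(2) Suc.prems(3)[of 0] h_nonneg[of ?w1 "Suc n"] w1
    by (intro mult_right_mono) (auto simp: frac_le)
  also have "\<dots> \<le> ?R * (?R ^ L * h (Suc n + L) (\<lambda>i. ?w1 (i + L)))"
    using Suc.IH[of ?w1 "Suc n"] w1 Suc.prems(2,3) by (intro mult_left_mono) auto
  finally show ?case by (simp add: ac_simps)
qed simp

lemma letters_less_letter_bound:
  assumes "w \<in> S n"
  shows "w k < letter_bound next_bound (w 0) k"
proof (rule less_letter_bound)
  fix j
  have "(\<lambda>i. w (i + Suc j)) \<in> Efib A \<theta> (\<theta> (y (n + j)))"
    using Efib_shift[OF assms, of "Suc j"] by simp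
  moreover have "A (y (n + j)) (w j) (w (Suc j))"
    using assms unfolding Efib_funpow_iff by blast
  ultimately show "w (Suc j) < next_bound (w j)"
    using successor_less[of "\<lambda>i. w (i + Suc j)" "n + j" "w j"] by simp
qed

lemma F_nonempty: "F \<noteq> {}"
  using measure_cyl_F[of 0] by (auto simp: cyl_def)

lemma exists_small_h_on_F: "\<exists>b\<in>F. \<exists>\<tau>\<in>cyl A \<theta> (y m) {b}. h m \<tau> \<le> 4 * real (card F)"
proof -
  interpret prob_space "\<nu> (y m)" by (rule prob_space_nu)
  have card: "0 < card F" using finite_F F_nonempty by (simp add: card_gt_0_iff)
  have "cyl A \<theta> (y m) F = (\<Union>b\<in>F. cyl A \<theta> (y m) {b})" by (auto simp: cyl_def)
  then obtain b where b: "b \<in> F" and "measure (\<nu> (y m)) (cyl A \<theta> (y m) F) / card F \<le> prob (cyl A \<theta> (y m) {b})"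
    using exists_measure_ge_average[OF finite_F F_nonempty cyl_in_sets_nu] by metis
  moreover have "1 / (2 * card F) \<le> measure (\<nu> (y m)) (cyl A \<theta> (y m) F) / card F"
    using measure_cyl_F[of m] card by (simp add: field_simps)
  ultimately have "1 / (2 * card F) \<le> prob (cyl A \<theta> (y m) {b})" by linarith
  then have "(\<integral>w. h m w \<partial>\<nu> (y m)) < 4 * real (card F) * prob (cyl A \<theta> (y m) {b})"
    using card integral_h[of m] by (simp add: field_simps)
  then have "\<exists>\<tau>\<in>cyl A \<theta> (y m) {b}. h m \<tau> \<le> 4 * real (card F)"
    using h_nonneg space_nu by (intro exists_le_if_integral_less[OF cyl_in_sets_nu integrable_h]) auto
  then show ?thesis using b by blast
qed

text \<open>A path of length path_len e leads from e into a cylinder containing a point where h is small,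
  and c_min e bounds e^\<phi> from below on every letter the path can visit.\<close>

definition path_len :: "nat \<Rightarrow> nat" where
  "path_len e = Max (Nm e ` F) + 2"

definition c_min :: "nat \<Rightarrow> real" where
  "c_min e = Min (c ` {..<Max (letter_bound next_bound e ` {..<path_len e})})"

definition bound_on_cyl :: "nat \<Rightarrow> real" where
  "bound_on_cyl e = exp distortion_exponent * (exp K / c_min e) ^ path_len e * (4 * card F)"

lemma c_min_pos: "0 < c_min e"
proof -
  have "letter_bound next_bound e 0 \<le> Max (letter_bound next_bound e ` {..<path_len e})"
    by (rule Max_ge) (auto simp: path_len_def intro!: image_eqI[where x=0])
  then show ?thesis unfolding c_min_def using c_pos by (subst Min_gr_iff) (auto simp: lessThan_empty_iff)
qed

lemma h_le_bound_on_cyl: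
  assumes e: "e \<in> F" and \<rho>: "\<rho> \<in> cyl A \<theta> (y n) {e}"
  shows "h n \<rho> \<le> bound_on_cyl e"
proof -
  define L where "L = path_len e"
  obtain b \<tau> where b: "b \<in> F" and \<tau>: "\<tau> \<in> cyl A \<theta> (y (n + L)) {b}" and h\<tau>: "h (n + L) \<tau> \<le> 4 * real (card F)"
    using exists_small_h_on_F by blast
  have "Nm e b \<le> Max (Nm e ` F)" using finite_F b by simp
  then obtain u where u: "u 0 = e" "u L = \<tau> 0" "\<forall>j<L. A ((\<theta>^^(n + j)) x) (u j) (u (Suc j))"
    using mixing[of e b _ n] \<tau> unfolding L_def path_len_def cyl_def by auto
  define w where "w i = (if i < L then u i else \<tau> (i - L))" for i
  have L_pos: "0 < L" by (simp add: L_def path_len_def)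
  have w: "w \<in> S n" unfolding w_def
    by (rule Efib_splice) (use u \<tau> in \<open>auto simp: cyl_def\<close>)
  have w0: "w 0 = e" using u(1) L_pos by (simp add: w_def)
  have c_min_le: "c_min e \<le> c (w k)" if "k < L" for k
  proof -
    have "w k < letter_bound next_bound e k" using letters_less_letter_bound[OF w] w0 by simp
    also have "\<dots> \<le> Max (letter_bound next_bound e ` {..<path_len e})"
      using that by (intro Max_ge) (auto simp: L_def)
    finally show ?thesis unfolding c_min_def by (intro Min_le) auto
  qed
  have "(\<lambda>i. w (i + L)) = \<tau>" by (simp add: w_def)
  then have "h n w \<le> (exp K / c_min e) ^ L * h (n + L) \<tau>"
    using h_le_shift[OF w c_min_pos c_min_le, where L=L] by simp
  also have "\<dots> \<le> (exp K / c_min e) ^ L * (4 * card F)"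
    using h\<tau> c_min_pos[of e] by (intro mult_left_mono) auto
  finally have hw: "h n w \<le> (exp K / c_min e) ^ L * (4 * card F)" .
  have "h n \<rho> \<le> exp distortion_exponent * h n w"
    using \<rho> w w0 by (intro h_le_same_letter) (auto simp: cyl_def)
  also have "\<dots> \<le> bound_on_cyl e"
    unfolding bound_on_cyl_def L_def[symmetric] mult.assoc using hw by (intro mult_left_mono) auto
  finally show ?thesis .
qed

definition Q :: real where
  "Q = Max (bound_on_cyl ` F)"

lemma h_le_Q:
  assumes "\<rho> \<in> cyl A \<theta> (y n) F"
  shows "h n \<rho> \<le> Q"
proof -
  have "\<rho> 0 \<in> F" "\<rho> \<in> cyl A \<theta> (y n) {\<rho> 0}" using assms by (auto simp: cyl_def)
  then have "h n \<rho> \<le> bound_on_cyl (\<rho> 0)" by (rule h_le_bound_on_cyl)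
  also have "\<dots> \<le> Q" unfolding Q_def using finite_F \<open>\<rho> 0 \<in> F\<close> by simp
  finally show ?thesis .
qed

lemma exists_Lop_one_le_3_lam: "\<exists>w'\<in>cyl A \<theta> (\<theta> (y n)) F. Lop A \<phi> (y n) (\<lambda>_. 1) w' \<le> 3 * lam (y n)"
proof -
  interpret prob_space "\<nu> (y (Suc n))" by (rule prob_space_nu)
  have integral: "(\<integral>w. Lop A \<phi> (y n) (\<lambda>_. 1) w \<partial>\<nu> (y (Suc n))) = lam (y n)"
    using conformal[OF Cb_const, of n 1] prob_space.prob_space[OF prob_space_nu[of n]] by simp
  then have "integrable (\<nu> (y (Suc n))) (Lop A \<phi> (y n) (\<lambda>_. 1))"
    using lam_pos[of n] not_integrable_integral_eq by fastforce
  moreover have "(\<integral>w. Lop A \<phi> (y n) (\<lambda>_. 1) w \<partial>\<nu> (y (Suc n))) < 3 * lam (y n) * prob (cyl A \<theta> (y (Suc n)) F)"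
    using integral measure_cyl_F[of "Suc n"] lam_pos[of n] by simp
  ultimately have "\<exists>w'\<in>cyl A \<theta> (y (Suc n)) F. Lop A \<phi> (y n) (\<lambda>_. 1) w' \<le> 3 * lam (y n)"
    using space_nu[of "Suc n"]
    by (intro exists_le_if_integral_less[OF cyl_in_sets_nu]) (auto intro: fibre.Lop_nonneg)
  then show ?thesis by simp
qed

lemma Lop_h_le:
  assumes h: "\<And>v. v \<in> S n \<Longrightarrow> h n v \<le> M" and "0 \<le> M" and w: "w \<in> Efib A \<theta> (\<theta> (y n))"
  shows "Lop A \<phi> (y n) (h n) w \<le> max Q 0 * Lop A \<phi> (y n) (\<lambda>_. 1) w + M * (\<kappa> * (3 * lam (y n)))"
proof -
  let ?ind = "indicator (S n - cyl A \<theta> (y n) F) :: _ \<Rightarrow> real"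
  obtain B where B: "\<forall>v\<in>S n. \<bar>h n v\<bar> \<le> B" using h_bounded by blast
  have "Lop A \<phi> (y n) (h n) w \<le> Lop A \<phi> (y n) (\<lambda>v. max Q 0 * 1 + M * ?ind v) w"
  proof (rule fibre.Lop_mono[where G=B and H="max Q 0 + M"])
    fix v assume v: "v \<in> S n"
    show "h n v \<le> max Q 0 * 1 + M * ?ind v"
      using h_le_Q[of v n] h[OF v] \<open>0 \<le> M\<close> v by (cases "v \<in> cyl A \<theta> (y n) F") auto
  qed (use B w \<open>0 \<le> M\<close> in \<open>auto simp: indicator_def\<close>)
  also have "\<dots> = Lop A \<phi> (y n) (\<lambda>v. max Q 0 * 1) w + Lop A \<phi> (y n) (\<lambda>v. M * ?ind v) w"
    by (rule fibre.Lop_add[where G="max Q 0" and H=M]) (use w \<open>0 \<le> M\<close> in \<open>auto simp: indicator_def\<close>)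
  also have "\<dots> = max Q 0 * Lop A \<phi> (y n) (\<lambda>_. 1) w + M * Lop A \<phi> (y n) ?ind w"
    by (simp only: fibre.Lop_cmult)
  also have "\<dots> \<le> max Q 0 * Lop A \<phi> (y n) (\<lambda>_. 1) w + M * (\<kappa> * (3 * lam (y n)))"
  proof -
    obtain w' where w': "w' \<in> cyl A \<theta> (\<theta> (y n)) F" "Lop A \<phi> (y n) (\<lambda>_. 1) w' \<le> 3 * lam (y n)"
      using exists_Lop_one_le_3_lam by blast
    have "Lop A \<phi> (y n) ?ind w \<le> \<kappa> * Lop A \<phi> (y n) (\<lambda>_. 1) w'" by (rule condC[OF w w'(1)])
    also have "\<dots> \<le> \<kappa> * (3 * lam (y n))" using w'(2) kappa by (intro mult_left_mono) auto
    finally show ?thesis using \<open>0 \<le> M\<close> by (simp add: mult_left_mono)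
  qed
  finally show ?thesis .
qed

definition Mhat :: real where
  "Mhat = max 1 (4 * exp K * max Q 0 * BL)"

text \<open>Since 3 \<kappa> < 3/4, a quarter of Mhat absorbs the contribution of the letters in F.\<close>

lemma h_le_Mhat: "w \<in> S n \<Longrightarrow> h n w \<le> Mhat"
proof (induction n arbitrary: w)
  case 0
  then show ?case by (simp add: Mhat_def)
next
  case (Suc n)
  let ?Q = "max Q 0"
  have w: "w \<in> Efib A \<theta> (\<theta> (y n))" using Suc.prems by simp
  have "0 \<le> Mhat" by (simp add: Mhat_def)
  have L1: "0 \<le> Lop A \<phi> (y n) (\<lambda>_. 1) w" "Lop A \<phi> (y n) (\<lambda>_. 1) w \<le> BL"
    using fibre.Lop_nonneg[OF _ w] Lop_one_le[OF w] by auto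
  have "h (Suc n) w = Lop A \<phi> (y n) (h n) w / lam (y n)" unfolding Lhn_Suc ..
  also have "\<dots> \<le> (?Q * Lop A \<phi> (y n) (\<lambda>_. 1) w + Mhat * (\<kappa> * (3 * lam (y n)))) / lam (y n)"
    using Lop_h_le[OF Suc.IH \<open>0 \<le> Mhat\<close> w] lam_pos[of n] by (simp add: divide_right_mono)
  also have "\<dots> = ?Q * Lop A \<phi> (y n) (\<lambda>_. 1) w * (1 / lam (y n)) + 3 * \<kappa> * Mhat"
    using lam_pos[of n] by (simp add: field_simps)
  also have "\<dots> \<le> ?Q * BL * exp K + 3 * \<kappa> * Mhat"
    using L1 inverse_lam_le_exp_K[of n] lam_pos[of n] kappa \<open>0 \<le> Mhat\<close>
    by (intro add_mono mult_mono mult_left_mono) auto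
  also have "\<dots> \<le> Mhat / 4 + 3 / 4 * Mhat"
    using kappa \<open>0 \<le> Mhat\<close> by (intro add_mono mult_right_mono) (auto simp: Mhat_def ac_simps)
  finally show ?case by simp
qed

lemma abs_Lhn_le_h:
  assumes "g \<in> Cb (S 0)" "supnorm (S 0) g \<le> 1" "w \<in> S n"
  shows "\<bar>Lhn n g w\<bar> \<le> h n w"
  using assms(3)
proof (induction n arbitrary: w)
  case 0
  then show ?case using assms(2) unfolding supnorm_def by (simp add: SUP_le_iff)
next
  case (Suc n)
  obtain B where "\<forall>v\<in>S n. \<bar>h n v\<bar> \<le> B" using h_bounded by blast
  then have "\<bar>Lop A \<phi> (y n) (Lhn n g) w\<bar> \<le> Lop A \<phi> (y n) (h n) w"
    by (intro fibre.abs_Lop_le[where H=B]) (use Suc in auto)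
  then show ?case unfolding Lhn_Suc using lam_pos[of n] by (simp add: abs_divide divide_right_mono)
qed

lemma opnorm_Lhn_eq: "opnorm (S 0) (S n) (Lhn n) = supnorm (S n) (h n)"
proof (rule antisym)
  show "opnorm (S 0) (S n) (Lhn n) \<le> supnorm (S n) (h n)"
    unfolding opnorm_def
  proof (rule SUP_least)
    fix g assume g: "g \<in> {g \<in> Cb (S 0). supnorm (S 0) g \<le> 1}"
    show "supnorm (S n) (Lhn n g) \<le> supnorm (S n) (h n)"
      unfolding supnorm_def
    proof (rule SUP_mono)
      fix w assume w: "w \<in> S n"
      have "ennreal \<bar>Lhn n g w\<bar> \<le> ennreal \<bar>h n w\<bar>"
        using abs_Lhn_le_h[of g w n] g w h_nonneg[OF w] by (intro ennreal_leI) auto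
      then show "\<exists>w'\<in>S n. ennreal \<bar>Lhn n g w\<bar> \<le> ennreal \<bar>h n w'\<bar>" using w by blast
    qed
  qed
  have "(\<lambda>_. 1) \<in> {g \<in> Cb (S 0). supnorm (S 0) g \<le> 1}"
    using Cb_const by (auto simp: supnorm_def intro: SUP_least)
  then show "supnorm (S n) (h n) \<le> opnorm (S 0) (S n) (Lhn n)"
    unfolding opnorm_def by (rule SUP_upper)
qed

lemma supnorm_h_le_Mhat: "supnorm (S n) (h n) \<le> ennreal Mhat"
  unfolding supnorm_def using h_le_Mhat h_nonneg by (intro SUP_least ennreal_leI) simp

end

section \<open>Almost every orbit is fine\<close>

lemma AE_funpow:
  assumes \<theta>: "\<theta> \<in> M \<rightarrow>\<^sub>M M" "distr M M \<theta> = M" and P: "AE y in M. P y"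
  shows "AE x in M. \<forall>i. P ((\<theta>^^i) x)"
proof -
  have "AE x in M. P ((\<theta>^^i) x)" for i
  proof (induction i)
    case (Suc i)
    then have "AE x in distr M M \<theta>. P ((\<theta>^^i) x)" unfolding \<theta>(2) .
    then show ?case using AE_distrD[OF \<theta>(1)] by (simp add: funpow_Suc_right del: funpow.simps)
  qed (simp add: P)
  then show ?thesis by (simp add: AE_all_countable)
qed

lemma mixing_bound:
  assumes "standing_setup M \<theta> A"
  obtains Nm where "\<And>a b n x. Nm a b \<le> n \<Longrightarrow> x \<in> space M \<Longrightarrow> \<exists>w. w 0 = a \<and> w (n + 2) = b \<and>
      (\<forall>j<n + 2. A ((\<theta>^^j) x) (w j) (w (Suc j)))"
proof -
  have "\<forall>a b. \<exists>N. \<forall>n\<ge>N. \<forall>x\<in>space M. \<exists>w. w 0 = a \<and> w (n + 2) = b \<and>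
      (\<forall>j<n + 2. A ((\<theta>^^j) x) (w j) (w (Suc j)))"
    using assms unfolding standing_setup_def by blast
  then have "\<forall>a. \<exists>Na. \<forall>b. \<forall>n\<ge>Na b. \<forall>x\<in>space M. \<exists>w. w 0 = a \<and> w (n + 2) = b \<and>
      (\<forall>j<n + 2. A ((\<theta>^^j) x) (w j) (w (Suc j)))"
    by (simp add: choice_iff)
  then obtain Nm where "\<forall>a b. \<forall>n\<ge>Nm a b. \<forall>x\<in>space M. \<exists>w. w 0 = a \<and> w (n + 2) = b \<and>
      (\<forall>j<n + 2. A ((\<theta>^^j) x) (w j) (w (Suc j)))"
    by (auto simp: choice_iff)
  then show ?thesis using that by blast
qed

lemma AE_summable_weights:
  assumes "condA M \<theta> A \<phi>"
  shows "AE y in M. \<forall>w\<in>Efib A \<theta> (\<theta> y). (\<lambda>e. exp (\<phi> y (case_nat e w))) summable_on {e. A y e (w 0)}"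
proof -
  obtain Me where Me: "\<And>e. 0 < Me e"
    "\<And>e. AE y in M. \<forall>w\<in>cyl A \<theta> (\<theta> y) {e}. 1 / Me e \<le> Lop A \<phi> y (\<lambda>_. 1) w"
    using choice[OF assms[unfolded condA_def]] by blast
  have "AE y in M. \<forall>e. \<forall>w\<in>cyl A \<theta> (\<theta> y) {e}. 1 / Me e \<le> Lop A \<phi> y (\<lambda>_. 1) w"
    using Me(2) by (simp add: AE_all_countable)
  then show ?thesis
  proof (rule eventually_mono, intro ballI summable_weights_if_Lop_one_nonzero)
    fix y w assume "\<forall>e. \<forall>w\<in>cyl A \<theta> (\<theta> y) {e}. 1 / Me e \<le> Lop A \<phi> y (\<lambda>_. 1) w" "w \<in> Efib A \<theta> (\<theta> y)"
    then have "1 / Me (w 0) \<le> Lop A \<phi> y (\<lambda>_. 1) w" by (auto simp: cyl_def)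
    then show "Lop A \<phi> y (\<lambda>_. 1) w \<noteq> 0" using Me(1)[of "w 0"] by auto
  qed
qed

lemma AE_holder:
  assumes "summable_potential M \<theta> A \<alpha> \<phi>"
  obtains V where "0 \<le> V" "AE y in M. \<forall>t\<in>Efib A \<theta> y. \<forall>w\<in>Efib A \<theta> y. t 0 = w 0 \<longrightarrow>
      \<bar>\<phi> y t - \<phi> y w\<bar> \<le> V * dseq t w powr \<alpha>"
proof -
  obtain K where "AE y in M. v_alpha \<alpha> (Efib A \<theta> y) (\<phi> y) \<le> ereal K"
    using assms unfolding summable_potential_def by blast
  then have "AE y in M. \<forall>t\<in>Efib A \<theta> y. \<forall>w\<in>Efib A \<theta> y. t 0 = w 0 \<longrightarrow>
      \<bar>\<phi> y t - \<phi> y w\<bar> \<le> max K 0 * dseq t w powr \<alpha>"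
  proof (rule eventually_mono, intro ballI impI)
    fix y t w assume K: "v_alpha \<alpha> (Efib A \<theta> y) (\<phi> y) \<le> ereal K"
      and tw: "t \<in> Efib A \<theta> y" "w \<in> Efib A \<theta> y" "t 0 = w 0"
    show "\<bar>\<phi> y t - \<phi> y w\<bar> \<le> max K 0 * dseq t w powr \<alpha>"
    proof (cases "t = w")
      case False
      then have "0 < dseq t w" by (simp add: dseq_def)
      have "ereal (\<bar>\<phi> y t - \<phi> y w\<bar> / dseq t w powr \<alpha>) \<le> v_alpha \<alpha> (Efib A \<theta> y) (\<phi> y)"
        unfolding v_alpha_def by (rule SUP_upper2[of "(t, w)"]) (use tw False in auto)
      then have "\<bar>\<phi> y t - \<phi> y w\<bar> / dseq t w powr \<alpha> \<le> K"
        using K order_trans by fastforce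
      then have "\<bar>\<phi> y t - \<phi> y w\<bar> / dseq t w powr \<alpha> \<le> max K 0" by simp
      then show ?thesis using \<open>0 < dseq t w\<close> by (simp add: divide_le_eq mult.commute)
    qed (simp add: dseq_def)
  qed
  then show ?thesis using that[of "max K 0"] by simp
qed

lemma AE_exp_phi_ge:
  assumes "summable_potential M \<theta> A \<alpha> \<phi>"
  obtains c C where "\<And>e. 0 < c e"
    "AE y in M. \<forall>e. \<forall>w\<in>cyl A \<theta> y {e}. c e \<le> exp (\<phi> y w) \<and> exp (\<phi> y w) \<le> C e"
proof -
  have "\<forall>e. \<exists>c C. 0 < c \<and> (AE y in M. \<forall>w\<in>cyl A \<theta> y {e}. c \<le> exp (\<phi> y w) \<and> exp (\<phi> y w) \<le> C)"
    using assms unfolding summable_potential_def by blast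
  then obtain c where "\<forall>e. \<exists>C. 0 < c e \<and>
      (AE y in M. \<forall>w\<in>cyl A \<theta> y {e}. c e \<le> exp (\<phi> y w) \<and> exp (\<phi> y w) \<le> C)"
    by (auto simp: choice_iff)
  then have c: "\<forall>e. 0 < c e" "\<forall>e. \<exists>C. AE y in M. \<forall>w\<in>cyl A \<theta> y {e}. c e \<le> exp (\<phi> y w) \<and> exp (\<phi> y w) \<le> C"
    by auto
  then obtain C where "\<forall>e. AE y in M. \<forall>w\<in>cyl A \<theta> y {e}. c e \<le> exp (\<phi> y w) \<and> exp (\<phi> y w) \<le> C e"
    by (auto simp: choice_iff)
  then show ?thesis using that[of c C] c(1) by (simp add: AE_all_countable)
qed

lemma AE_tail_le:
  assumes "summable_potential M \<theta> A \<alpha> \<phi>"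
  obtains l where "AE y in M. \<forall>k. \<forall>t\<in>Efib A \<theta> (\<theta> y).
      Lop A \<phi> y (indicator (Efib A \<theta> y - cyl A \<theta> y {..l k})) t \<le> 1 / Suc k"
proof -
  have "\<forall>k::nat. \<exists>l. AE y in M. \<forall>t\<in>Efib A \<theta> (\<theta> y).
      Lop A \<phi> y (indicator (Efib A \<theta> y - cyl A \<theta> y {..l})) t \<le> 1 / Suc k"
  proof
    fix k :: nat
    have "(1::real) / Suc k > 0" by simp
    then show "\<exists>l. AE y in M. \<forall>t\<in>Efib A \<theta> (\<theta> y).
        Lop A \<phi> y (indicator (Efib A \<theta> y - cyl A \<theta> y {..l})) t \<le> 1 / Suc k"
      using assms unfolding summable_potential_def atLeast0AtMost by blast
  qed
  then obtain l where "\<forall>k. AE y in M. \<forall>t\<in>Efib A \<theta> (\<theta> y).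
      Lop A \<phi> y (indicator (Efib A \<theta> y - cyl A \<theta> y {..l k})) t \<le> 1 / Suc k"
    by (auto simp: choice_iff)
  then show ?thesis using that[of l] by (simp add: AE_all_countable)
qed

lemma AE_Lop_one_small:
  assumes "condB M \<theta> A \<phi>"
  obtains eb where "AE y in M. \<forall>k e. eb k \<le> e \<longrightarrow>
      (\<forall>w\<in>cyl A \<theta> (\<theta> y) {e}. Lop A \<phi> y (\<lambda>_. 1) w \<le> 1 / Suc k)"
proof -
  have "\<forall>k::nat. \<exists>eb. \<forall>e\<ge>eb. AE y in M. \<forall>w\<in>cyl A \<theta> (\<theta> y) {e}. Lop A \<phi> y (\<lambda>_. 1) w \<le> 1 / Suc k"
    using assms unfolding condB_def by simp
  then have "\<exists>eb. \<forall>k. \<forall>e\<ge>eb k.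
      AE y in M. \<forall>w\<in>cyl A \<theta> (\<theta> y) {e}. Lop A \<phi> y (\<lambda>_. 1) w \<le> 1 / Suc k"
    by (rule choice)
  then obtain eb where eb: "\<forall>k. \<forall>e\<ge>eb k.
      AE y in M. \<forall>w\<in>cyl A \<theta> (\<theta> y) {e}. Lop A \<phi> y (\<lambda>_. 1) w \<le> 1 / Suc k"
    by blast
  have "AE y in M. eb k \<le> e \<longrightarrow> (\<forall>w\<in>cyl A \<theta> (\<theta> y) {e}. Lop A \<phi> y (\<lambda>_. 1) w \<le> 1 / Suc k)" for k e
    by (cases "eb k \<le> e") (use eb in auto)
  then show ?thesis using that[of eb] by (simp add: AE_all_countable)
qed

definition fibre_estimates ::
    "('a \<Rightarrow> nat \<Rightarrow> nat \<Rightarrow> bool) \<Rightarrow> ('a \<Rightarrow> 'a) \<Rightarrow> ('a \<Rightarrow> (nat \<Rightarrow> nat) \<Rightarrow> real) \<Rightarrow> ('a \<Rightarrow> real)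
      \<Rightarrow> ('a \<Rightarrow> (nat \<Rightarrow> nat) measure) \<Rightarrow> real \<Rightarrow> real \<Rightarrow> real \<Rightarrow> real \<Rightarrow> nat set
      \<Rightarrow> (nat \<Rightarrow> real) \<Rightarrow> (nat \<Rightarrow> real) \<Rightarrow> (nat \<Rightarrow> nat) \<Rightarrow> (nat \<Rightarrow> nat) \<Rightarrow> 'a \<Rightarrow> bool" where
  "fibre_estimates A \<theta> \<phi> lam \<nu> \<alpha> V K \<kappa> F c C l eb y \<longleftrightarrow>
    (\<forall>w\<in>Efib A \<theta> (\<theta> y). (\<lambda>e. exp (\<phi> y (case_nat e w))) summable_on {e. A y e (w 0)})
    \<and> (\<forall>t\<in>Efib A \<theta> y. \<forall>w\<in>Efib A \<theta> y. t 0 = w 0 \<longrightarrow> \<bar>\<phi> y t - \<phi> y w\<bar> \<le> V * dseq t w powr \<alpha>)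
    \<and> (\<forall>e. \<forall>w\<in>cyl A \<theta> y {e}. c e \<le> exp (\<phi> y w) \<and> exp (\<phi> y w) \<le> C e)
    \<and> (\<forall>k. \<forall>t\<in>Efib A \<theta> (\<theta> y). Lop A \<phi> y (indicator (Efib A \<theta> y - cyl A \<theta> y {..l k})) t \<le> 1 / Suc k)
    \<and> (\<forall>k e. eb k \<le> e \<longrightarrow> (\<forall>w\<in>cyl A \<theta> (\<theta> y) {e}. Lop A \<phi> y (\<lambda>_. 1) w \<le> 1 / Suc k))
    \<and> (\<forall>w\<in>Efib A \<theta> (\<theta> y). \<forall>w'\<in>cyl A \<theta> (\<theta> y) F.
        Lop A \<phi> y (indicator (Efib A \<theta> y - cyl A \<theta> y F)) w \<le> \<kappa> * Lop A \<phi> y (\<lambda>_. 1) w')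
    \<and> (\<forall>g\<in>Cb (Efib A \<theta> y). (\<integral>w. Lop A \<phi> y g w \<partial>\<nu> (\<theta> y)) = lam y * (\<integral>w. g w \<partial>\<nu> y))
    \<and> \<bar>ln (lam y)\<bar> \<le> K \<and> 1/2 \<le> measure (\<nu> y) (cyl A \<theta> y F)"

lemma AE_fibre_estimates:
  assumes fine: "fine_potential M \<theta> A \<alpha> \<phi> F" and conf: "fixed_conformal M \<theta> A \<phi> F \<nu> lam"
  obtains V K \<kappa> c C l eb where "0 \<le> V" "\<And>e. 0 < c e" "0 < \<kappa>" "\<kappa> < 1/4" "finite F"
    "AE y in M. fibre_estimates A \<theta> \<phi> lam \<nu> \<alpha> V K \<kappa> F c C l eb y"
proof -
  have sp: "summable_potential M \<theta> A \<alpha> \<phi>" and cA: "condA M \<theta> A \<phi>" and cB: "condB M \<theta> A \<phi>"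
    using fine by (auto simp: fine_potential_def)
  obtain \<kappa> where \<kappa>: "condC_with M \<theta> A \<phi> \<kappa> F" using fine by (auto simp: fine_potential_def)
  obtain V where "0 \<le> V" and holder: "AE y in M. \<forall>t\<in>Efib A \<theta> y. \<forall>w\<in>Efib A \<theta> y. t 0 = w 0 \<longrightarrow>
      \<bar>\<phi> y t - \<phi> y w\<bar> \<le> V * dseq t w powr \<alpha>"
    using AE_holder[OF sp] by blast
  obtain c C where "\<And>e. 0 < c e" and exp_phi: "AE y in M. \<forall>e. \<forall>w\<in>cyl A \<theta> y {e}.
      c e \<le> exp (\<phi> y w) \<and> exp (\<phi> y w) \<le> C e"
    using AE_exp_phi_ge[OF sp] by blast
  obtain l where tail: "AE y in M. \<forall>k. \<forall>t\<in>Efib A \<theta> (\<theta> y).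
      Lop A \<phi> y (indicator (Efib A \<theta> y - cyl A \<theta> y {..l k})) t \<le> 1 / Suc k"
    using AE_tail_le[OF sp] by blast
  obtain eb where small: "AE y in M. \<forall>k e. eb k \<le> e \<longrightarrow>
      (\<forall>w\<in>cyl A \<theta> (\<theta> y) {e}. Lop A \<phi> y (\<lambda>_. 1) w \<le> 1 / Suc k)"
    using AE_Lop_one_small[OF cB] by blast
  note conf' = conf[unfolded fixed_conformal_def]
  obtain K where "AE y in M. \<bar>ln (lam y)\<bar> \<le> K" using conf' by blast
  then have "AE y in M. fibre_estimates A \<theta> \<phi> lam \<nu> \<alpha> V K \<kappa> F c C l eb y"
    unfolding fibre_estimates_def using AE_summable_weights[OF cA] holder exp_phi tail small \<kappa> conf'
    by (intro eventually_conj) (auto simp: condC_with_def)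
  with that[OF \<open>0 \<le> V\<close> \<open>\<And>e. 0 < c e\<close>] \<kappa> show ?thesis by (auto simp: condC_with_def)
qed

lemma tail_small_if_fibre_estimates:
  assumes "fibre_estimates A \<theta> \<phi> lam \<nu> \<alpha> V K \<kappa> F c C l eb y" and "0 < \<epsilon>"
  shows "\<exists>l'. \<forall>t\<in>Efib A \<theta> (\<theta> y). Lop A \<phi> y (indicator (Efib A \<theta> y - cyl A \<theta> y {..l'})) t \<le> \<epsilon>"
proof -
  obtain k :: nat where "1 / Suc k < \<epsilon>" using nat_approx_posE[OF assms(2)] by blast
  then show ?thesis using assms(1) unfolding fibre_estimates_def
    by (intro exI[of _ "l k"]) (meson less_imp_le order_trans)
qed

lemma Lop_one_le_if_fibre_estimates:
  assumes est: "fibre_estimates A \<theta> \<phi> lam \<nu> \<alpha> V K \<kappa> F c C l eb y" and t: "t \<in> Efib A \<theta> (\<theta> y)"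
  shows "Lop A \<phi> y (\<lambda>_. 1) t \<le> (\<Sum>e\<le>l 0. max (C e) 0) + 1"
proof -
  note est' = est[unfolded fibre_estimates_def]
  interpret transfer_fibre A \<theta> \<phi> y by unfold_locales (use est' in blast)
  have "\<forall>t\<in>S'. Lop A \<phi> y (indicator (S - cyl A \<theta> y {..l 0})) t \<le> 1 / Suc 0"
    using est' by blast
  then show ?thesis
    by (intro Lop_one_le_if_tail_le_1[OF _ _ t]) (use est' t in auto)
qed

lemma successor_less_if_fibre_estimates:
  assumes est: "fibre_estimates A \<theta> \<phi> lam \<nu> \<alpha> V K \<kappa> F c C l eb y"
    and kc: "1 / real (Suc k) < c a" and \<rho>: "\<rho> \<in> Efib A \<theta> (\<theta> y)" "A y a (\<rho> 0)"
  shows "\<rho> 0 < eb k"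
proof -
  note est' = est[unfolded fibre_estimates_def]
  interpret transfer_fibre A \<theta> \<phi> y by unfold_locales (use est' in blast)
  have "case_nat a \<rho> \<in> cyl A \<theta> y {a}" using \<rho> by (simp add: cyl_def Efib_cons_iff)
  then have "c a \<le> exp (\<phi> y (case_nat a \<rho>))" using est' by blast
  then show ?thesis by (rule successor_letter_less[OF \<rho> _ _ kc]) (use est' in auto)
qed

lemma fine_orbit_if_fibre_estimates:
  assumes sp: "summable_potential M \<theta> A \<alpha> \<phi>" and conf: "fixed_conformal M \<theta> A \<phi> F \<nu> lam"
    and mixing: "\<And>a b n x. Nm a b \<le> n \<Longrightarrow> x \<in> space M \<Longrightarrow> \<exists>w. w 0 = a \<and> w (n + 2) = b \<and>
      (\<forall>j<n + 2. A ((\<theta>^^j) x) (w j) (w (Suc j)))"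
    and const: "0 < \<alpha>" "0 \<le> V" "\<And>e. 0 < c e" "0 < \<kappa>" "\<kappa> < 1/4" "finite F"
    and kc: "\<And>a. 1 / real (Suc (kc a)) < c a"
    and space: "\<And>i. (\<theta>^^i) x \<in> space M"
    and est: "\<And>i. fibre_estimates A \<theta> \<phi> lam \<nu> \<alpha> V K \<kappa> F c C l eb ((\<theta>^^i) x)"
  shows "fine_orbit A \<theta> \<phi> lam \<nu> x \<alpha> V K \<kappa> ((\<Sum>e\<le>l 0. max (C e) 0) + 1) F c (\<lambda>a. eb (kc a)) Nm"
proof (rule fine_orbit.intro)
  fix i
  let ?y = "(\<theta>^^i) x"
  note est_i = est[of i, unfolded fibre_estimates_def]
  show "(\<lambda>e. exp (\<phi> ?y (case_nat e w))) summable_on {e. A ?y e (w 0)}" if "w \<in> Efib A \<theta> (\<theta> ?y)" for w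
    using est_i that by blast
  show "dcont_on (Efib A \<theta> ?y) (\<phi> ?y)"
    using sp space[of i] by (simp add: summable_potential_def)
  show "\<exists>l. \<forall>t\<in>Efib A \<theta> (\<theta> ?y). Lop A \<phi> ?y (indicator (Efib A \<theta> ?y - cyl A \<theta> ?y {..l})) t \<le> \<epsilon>"
    if "0 < \<epsilon>" for \<epsilon>
    by (rule tail_small_if_fibre_estimates[OF est that])
  show "Lop A \<phi> ?y (\<lambda>_. 1) t \<le> (\<Sum>e\<le>l 0. max (C e) 0) + 1" if "t \<in> Efib A \<theta> (\<theta> ?y)" for t
    by (rule Lop_one_le_if_fibre_estimates[OF est that])
  show "\<rho> 0 < eb (kc a)" if "\<rho> \<in> Efib A \<theta> (\<theta> ?y)" "A ?y a (\<rho> 0)" for a \<rho>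
    by (rule successor_less_if_fibre_estimates[OF est kc that])
  show "\<bar>\<phi> ?y t - \<phi> ?y w\<bar> \<le> V * dseq t w powr \<alpha>" if "t \<in> Efib A \<theta> ?y" "w \<in> Efib A \<theta> ?y" "t 0 = w 0" for t w
    using est_i that by blast
  show "c e \<le> exp (\<phi> ?y w)" if "w \<in> cyl A \<theta> ?y {e}" for e w
    using est_i that by blast
  show "Lop A \<phi> ?y (indicator (Efib A \<theta> ?y - cyl A \<theta> ?y F)) w \<le> \<kappa> * Lop A \<phi> ?y (\<lambda>_. 1) w'"
    if "w \<in> Efib A \<theta> (\<theta> ?y)" "w' \<in> cyl A \<theta> (\<theta> ?y) F" for w w'
    using est_i that by blast
  show "(\<integral>w. Lop A \<phi> ?y g w \<partial>\<nu> (\<theta> ?y)) = lam ?y * (\<integral>w. g w \<partial>\<nu> ?y)" if "g \<in> Cb (Efib A \<theta> ?y)" for g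
    using est_i that by blast
  show "\<bar>ln (lam ?y)\<bar> \<le> K" "1/2 \<le> measure (\<nu> ?y) (cyl A \<theta> ?y F)"
    using est_i by blast+
  show "0 < lam ?y" "prob_space (\<nu> ?y)" "sets (\<nu> ?y) = sets (restrict_space seqM (Efib A \<theta> ?y))"
    using conf space[of i] by (auto simp: fixed_conformal_def random_measure_def)
  show "\<exists>w. w 0 = a \<and> w (n + 2) = b \<and> (\<forall>j<n + 2. A ((\<theta>^^(i + j)) x) (w j) (w (Suc j)))"
    if "Nm a b \<le> n" for a b n
  proof -
    have "(\<theta>^^(i + j)) x = (\<theta>^^j) ?y" for j by (metis add.commute comp_apply funpow_add)
    then show ?thesis using mixing[OF that space[of i]] by simp
  qed
qed (use const in auto)

lemma funpow_in_space: "\<theta> \<in> M \<rightarrow>\<^sub>M M \<Longrightarrow> x \<in> space M \<Longrightarrow> (\<theta>^^i) x \<in> space M"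
  by (induction i) (auto simp: measurable_space)

lemma AE_fine_orbit:
  assumes standing: "standing_setup M \<theta> A" and "0 < \<alpha>"
    and fine: "fine_potential M \<theta> A \<alpha> \<phi> F" and conf: "fixed_conformal M \<theta> A \<phi> F \<nu> lam"
  shows "\<exists>V K \<kappa> BL c nb Nm. AE x in M. fine_orbit A \<theta> \<phi> lam \<nu> x \<alpha> V K \<kappa> BL F c nb Nm"
proof -
  have \<theta>: "\<theta> \<in> M \<rightarrow>\<^sub>M M" "distr M M \<theta> = M" using standing by (auto simp: standing_setup_def)
  obtain Nm where mixing: "\<And>a b n x. Nm a b \<le> n \<Longrightarrow> x \<in> space M \<Longrightarrow> \<exists>w. w 0 = a \<and> w (n + 2) = b \<and>
      (\<forall>j<n + 2. A ((\<theta>^^j) x) (w j) (w (Suc j)))"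
    using mixing_bound[OF standing] by blast
  have sp: "summable_potential M \<theta> A \<alpha> \<phi>" using fine by (simp add: fine_potential_def)
  obtain V K \<kappa> c C l eb where const: "0 \<le> V" "\<And>e. 0 < c e" "0 < \<kappa>" "\<kappa> < 1/4" "finite F"
    and est: "AE y in M. fibre_estimates A \<theta> \<phi> lam \<nu> \<alpha> V K \<kappa> F c C l eb y"
    using AE_fibre_estimates[OF fine conf] by metis
  have "\<forall>a. \<exists>k. 1 / real (Suc k) < c a" using const(2) by (metis nat_approx_posE of_nat_Suc)
  then obtain kc where kc: "\<And>a. 1 / real (Suc (kc a)) < c a" by (auto simp: choice_iff)
  have "AE x in M. fine_orbit A \<theta> \<phi> lam \<nu> x \<alpha> V K \<kappa> ((\<Sum>e\<le>l 0. max (C e) 0) + 1) F c (\<lambda>a. eb (kc a)) Nm"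
    using AE_space AE_funpow[OF \<theta> est]
  proof eventually_elim
    case (elim x)
    show ?case
      by (rule fine_orbit_if_fibre_estimates[OF sp conf mixing \<open>0 < \<alpha>\<close> const kc
            funpow_in_space[OF \<theta>(1) elim(1)]]) (use elim(2) in simp_all)
  qed
  then show ?thesis by blast
qed

theorem proposition4p3:
  fixes M :: "'a measure" and \<theta> :: "'a \<Rightarrow> 'a" and A :: "'a \<Rightarrow> nat \<Rightarrow> nat \<Rightarrow> bool"
    and \<alpha> :: real and \<phi> :: "'a \<Rightarrow> (nat \<Rightarrow> nat) \<Rightarrow> real" and F :: "nat set"
    and \<nu> :: "'a \<Rightarrow> (nat \<Rightarrow> nat) measure" and lam :: "'a \<Rightarrow> real"
  assumes "standing_setup M \<theta> A"
    and "0 < \<alpha>"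
    and "fine_potential M \<theta> A \<alpha> \<phi> F"
    and "fixed_conformal M \<theta> A \<phi> F \<nu> lam"
  shows "\<exists>Mhat::real. \<forall>n. AE x in M.
           opnorm (Efib A \<theta> x) (Efib A \<theta> ((\<theta> ^^ n) x)) (Lhat_pow A \<theta> \<phi> lam n x)
             = supnorm (Efib A \<theta> ((\<theta> ^^ n) x)) (Lhat_pow A \<theta> \<phi> lam n x (\<lambda>_. 1))
           \<and> supnorm (Efib A \<theta> ((\<theta> ^^ n) x)) (Lhat_pow A \<theta> \<phi> lam n x (\<lambda>_. 1)) \<le> ennreal Mhat"
proof -
  obtain V K \<kappa> BL c nb Nm where orbit: "AE x in M. fine_orbit A \<theta> \<phi> lam \<nu> x \<alpha> V K \<kappa> BL F c nb Nm"
    using AE_fine_orbit[OF assms] by blast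
  show ?thesis
  proof (intro exI allI)
    fix n
    show "AE x in M.
           opnorm (Efib A \<theta> x) (Efib A \<theta> ((\<theta> ^^ n) x)) (Lhat_pow A \<theta> \<phi> lam n x)
             = supnorm (Efib A \<theta> ((\<theta> ^^ n) x)) (Lhat_pow A \<theta> \<phi> lam n x (\<lambda>_. 1))
           \<and> supnorm (Efib A \<theta> ((\<theta> ^^ n) x)) (Lhat_pow A \<theta> \<phi> lam n x (\<lambda>_. 1))
               \<le> ennreal (fine_orbit.Mhat \<alpha> V K BL F c nb Nm)"
      using orbit
      by eventually_elim (metis fine_orbit.opnorm_Lhn_eq fine_orbit.supnorm_h_le_Mhat funpow_0)
  qed
qed

end
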